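(* Let $(\tilde T_i)_i$ be the points of a homogeneous rate-$1$ Poisson process on $[0,\infty)$ and $\alpha>1$. Then for all $w>0$, $$\mathbb E\Big[\exp\Big(-w\sum_i\tilde T_i^{-\alpha}\Big)\Big]=\exp\big(-w^{1/\alpha}\Gamma(1-\alpha^{-1})\big).$$ Moreover, if $\tilde\varepsilon\in(0,1]$, $\tilde\delta\in(0,1/3]$ and $1<\alpha\le\frac{e^{-4.2}\tilde\delta\tilde\varepsilon^2}{-\ln\tilde\delta}+1$, then $$\Pr\Big(\sum_i\tilde T_i^{-\alpha}\notin\Big[\frac{e^{-\tilde\varepsilon/2}}{\alpha-1},\,\frac{e^{\tilde\varepsilon/2}}{\alpha-1}\Big]\Big)\le\tilde\delta.$$
   Context: $\Gamma$ denotes the Gamma function. *)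

theory Defs
  imports "HOL-Probability.Probability"
begin

text \<open>Points of a homogeneous rate-1 Poisson process on [0,inf), listed in increasing
order: T n is the (n+1)-th arrival time, i.e. the partial sum of n+1 independent
Exp(1) inter-arrival times.\<close>
definition poisson_points :: "'a measure \<Rightarrow> (nat \<Rightarrow> 'a \<Rightarrow> real) \<Rightarrow> bool" where
  "poisson_points M T \<longleftrightarrow>
     (\<exists>E. prob_space.indep_vars M (\<lambda>_. borel) E UNIV \<and>
          (\<forall>i. distributed M lborel (E i) (exponential_density 1)) \<and>
          (\<forall>n. \<forall>x\<in>space M. T n x = (\<Sum>i\<le>n. E i x)))"

end

theory Submission
  imports Defs "HOL-Real_Asymp.Real_Asymp"
begin

text \<open>
Write T_i = E_0 + ... + E_i with independent standard exponential gaps E_j. For 0 <= g <= 1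
with tail mass G(s) = integral of g over [s, oo), the expectation of
  prod_{i<n} (1 - g(T_i)) * exp (- G(T_{n-1}))
equals exp (- G(0)) for every n: integrating out the last gap reduces this to
  integral_0^oo e^-y h(r+y) Psi(r+y) dy = Psi(r),   valid whenever Psi' = (1 - h) Psi.
As T_n grows linearly, letting n -> oo with g(t) = 1 - exp (- w t^-alpha) yields
E exp (- w sum_i T_i^-alpha) = exp (- G(0)), and G(0) = w^(1/alpha) Gamma(1 - 1/alpha) by Fubini.
Letting w -> 0 shows that the series converges almost surely.

For the concentration bound, the lower tail follows from Markov's inequality for exp (- S) and
Gamma(x) >= (1 - 2x)/x, a consequence of the log-convexity of Gamma. The upper tail follows from
the same identity with 1 + g in place of 1 - g, where 1 + g(t) = exp (u^alpha t^-alpha) beyond a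
threshold u, together with P(T_0 < u) <= u.
\<close>

section \<open>Integrating out an exponential gap\<close>

lemma interval_integral_exp_neg_ode:
  fixes h \<Psi> :: "real \<Rightarrow> real" and r B :: real
  assumes h_nn: "\<And>t. 0 \<le> h t" and P_nn: "\<And>t. 0 \<le> \<Psi> t"
    and hc: "\<And>t. 0 < t \<Longrightarrow> isCont h t"
    and D: "\<And>t. 0 < t \<Longrightarrow> (\<Psi> has_real_derivative (1 - h t) * \<Psi> t) (at t)"
    and c0: "(\<Psi> \<longlongrightarrow> \<Psi> 0) (at_right 0)"
    and bnd: "\<And>t. \<Psi> t \<le> B"
    and r: "0 \<le> r"
  shows "set_integrable lborel (einterval (ereal r) \<infinity>) (\<lambda>t. exp (-t) * h t * \<Psi> t)"
    and "(LBINT t=ereal r..\<infinity>. exp (-t) * h t * \<Psi> t) = exp (-r) * \<Psi> r"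
proof -
  define f where "f t = exp (-t) * h t * \<Psi> t" for t
  \<comment> \<open>The ODE makes \<open>- exp (-t) * \<Psi> t\<close> an antiderivative of \<open>f\<close>.\<close>
  define F where "F t = - exp (-t) * \<Psi> t" for t
  have FD: "(F has_real_derivative f t) (at t)" if "ereal r < ereal t" for t
  proof -
    from that r have t: "0 < t" by simp
    show ?thesis unfolding F_def f_def
      by (rule derivative_eq_intros D[OF t] refl)+ (simp add: algebra_simps)
  qed
  have fc: "isCont f t" if "ereal r < ereal t" for t
  proof -
    from that r have t: "0 < t" by simp
    have "isCont \<Psi> t" using D[OF t] by (rule DERIV_isCont)
    then show ?thesis unfolding f_def using hc[OF t] by (intro continuous_intros)
  qed
  have Pr: "(\<Psi> \<longlongrightarrow> \<Psi> r) (at_right r)"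
  proof (cases "r = 0")
    case True then show ?thesis using c0 by simp
  next
    case False
    then have "0 < r" using r by simp
    then have "isCont \<Psi> r" using D by (blast intro: DERIV_isCont)
    then show ?thesis by (simp add: isCont_def filterlim_at_split)
  qed
  have Fr: "(F \<longlongrightarrow> F r) (at_right r)"
    unfolding F_def by (intro tendsto_intros Pr)
  have Finf: "(F \<longlongrightarrow> 0) at_top"
  proof -
    have e: "((\<lambda>t. exp (-t) * B) \<longlongrightarrow> 0) at_top"
      by real_asymp
    have "((\<lambda>t. exp (-t) * \<Psi> t) \<longlongrightarrow> 0) at_top"
    proof (rule tendsto_sandwich[OF _ _ tendsto_const e])
      show "\<forall>\<^sub>F t in at_top. 0 \<le> exp (- t) * \<Psi> t" using P_nn by simp
      show "\<forall>\<^sub>F t in at_top. exp (- t) * \<Psi> t \<le> exp (- t) * B" using bnd by simp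
    qed
    then have "((\<lambda>t. - (exp (-t) * \<Psi> t)) \<longlongrightarrow> -0) at_top" by (rule tendsto_minus)
    then show ?thesis unfolding F_def by simp
  qed
  have "set_integrable lborel (einterval (ereal r) \<infinity>) f" "(LBINT t=ereal r..\<infinity>. f t) = 0 - F r"
    using interval_integral_FTC_nonneg[where F=F and f=f and a="ereal r" and b=\<infinity> and A="F r" and B=0, OF _ FD fc]
    by (auto simp: ereal_tendsto_simps f_def h_nn P_nn Fr Finf)
  then show "set_integrable lborel (einterval (ereal r) \<infinity>) (\<lambda>t. exp (-t) * h t * \<Psi> t)"
    and "(LBINT t=ereal r..\<infinity>. exp (-t) * h t * \<Psi> t) = exp (-r) * \<Psi> r"
    by (simp_all add: f_def[abs_def] F_def)
qed

lemma nn_integral_exponential_shift: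
  fixes h \<Psi> :: "real \<Rightarrow> real" and r B :: real
  assumes h_nn: "\<And>t. 0 \<le> h t" and P_nn: "\<And>t. 0 \<le> \<Psi> t"
    and hm[measurable]: "h \<in> borel_measurable borel" and Pm[measurable]: "\<Psi> \<in> borel_measurable borel"
    and hc: "\<And>t. 0 < t \<Longrightarrow> isCont h t"
    and D: "\<And>t. 0 < t \<Longrightarrow> (\<Psi> has_real_derivative (1 - h t) * \<Psi> t) (at t)"
    and c0: "(\<Psi> \<longlongrightarrow> \<Psi> 0) (at_right 0)"
    and bnd: "\<And>t. \<Psi> t \<le> B"
    and r: "0 \<le> r"
  shows "(\<integral>\<^sup>+y. ennreal (exponential_density 1 y) * ennreal (h (r+y) * \<Psi> (r+y)) \<partial>lborel) = ennreal (\<Psi> r)"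
proof -
  define f where "f t = exp (-t) * h t * \<Psi> t" for t
  note ftc = interval_integral_exp_neg_ode[OF h_nn P_nn hc D c0 bnd r, folded f_def]
  have "(\<integral>\<^sup>+y. ennreal (exponential_density 1 y) * ennreal (h (r+y) * \<Psi> (r+y)) \<partial>lborel)
      = (\<integral>\<^sup>+y. ennreal (indicator {0..} y * exp (-y) * h (r+y) * \<Psi> (r+y)) \<partial>lborel)"
    by (intro nn_integral_cong) (auto simp: ennreal_mult'[symmetric] h_nn P_nn indicator_def exponential_density_def)
  also have "\<dots> = (\<integral>\<^sup>+t. ennreal (indicator {r..} t * exp (-(t - r)) * h t * \<Psi> t) \<partial>lborel)"
    by (subst nn_integral_real_affine[where c=1 and t=r]) (auto simp: indicator_def)
  also have "\<dots> = (\<integral>\<^sup>+t. ennreal (exp r) * ennreal (indicator {r<..} t * f t) \<partial>lborel)"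
  proof (rule nn_integral_cong_AE)
    have "AE t in lborel. t \<noteq> r" by (rule AE_lborel_singleton)
    then show "AE t in lborel. ennreal (indicator {r..} t * exp (-(t - r)) * h t * \<Psi> t)
         = ennreal (exp r) * ennreal (indicator {r<..} t * f t)"
      by eventually_elim (auto simp: f_def indicator_def ennreal_mult'[symmetric] exp_diff exp_minus field_simps h_nn P_nn)
  qed
  also have "\<dots> = ennreal (exp r) * (\<integral>\<^sup>+t. ennreal (indicator {r<..} t * f t) \<partial>lborel)"
    by (rule nn_integral_cmult) (auto simp: f_def)
  also have "(\<integral>\<^sup>+t. ennreal (indicator {r<..} t * f t) \<partial>lborel) = ennreal (LBINT t=ereal r..\<infinity>. f t)"
  proof -
    have "integrable lborel (\<lambda>t. indicator {r<..} t * f t)"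
      using ftc(1) by (simp add: set_integrable_def)
    then show ?thesis
      by (subst nn_integral_eq_integral)
         (auto simp: interval_lebesgue_integral_def set_lebesgue_integral_def f_def h_nn P_nn indicator_def)
  qed
  also have "ennreal (exp r) * ennreal (LBINT t=ereal r..\<infinity>. f t) = ennreal (\<Psi> r)"
    by (simp add: ftc(2) ennreal_mult'[symmetric] exp_minus field_simps)
  finally show ?thesis .
qed

locale exp_arrivals = prob_space M for M :: "'a measure" +
  fixes E :: "nat \<Rightarrow> 'a \<Rightarrow> real"
  assumes ind: "indep_vars (\<lambda>_. borel) E UNIV"
    and dist: "\<And>i. distributed M lborel (E i) (exponential_density 1)"
begin

abbreviation gap_sum :: "nat \<Rightarrow> 'a \<Rightarrow> real" where
  "gap_sum n x \<equiv> \<Sum>j<n. E j x"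

abbreviation arrival :: "nat \<Rightarrow> 'a \<Rightarrow> real" where
  "arrival i x \<equiv> gap_sum (Suc i) x"

lemma E_measurable[measurable]: "E i \<in> borel_measurable M"
  using dist[of i] by (auto simp: distributed_def)

lemma nn_integral_integrate_last:
  fixes F :: "(nat \<Rightarrow> real) \<Rightarrow> real \<Rightarrow> ennreal"
  assumes Fm[measurable]: "(\<lambda>(\<omega>, y). F \<omega> y) \<in> borel_measurable (PiM {..<n} (\<lambda>_. borel) \<Otimes>\<^sub>M borel)"
  shows "(\<integral>\<^sup>+x. F (\<lambda>i\<in>{..<n}. E i x) (E n x) \<partial>M)
       = (\<integral>\<^sup>+x. (\<integral>\<^sup>+y. ennreal (exponential_density 1 y) * F (\<lambda>i\<in>{..<n}. E i x) y \<partial>lborel) \<partial>M)"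
proof -
  let ?S = "PiM {..<n} (\<lambda>_. borel :: real measure)"
  define X where "X x = (\<lambda>i\<in>{..<n}. E i x)" for x
  have Xm[measurable]: "X \<in> measurable M ?S" unfolding X_def by measurable
  let ?Z = "PiM {n} (\<lambda>_. borel :: real measure)"
  define Z where "Z x = (\<lambda>i\<in>{n}. E i x)" for x
  have Zm[measurable]: "Z \<in> measurable M ?Z" unfolding Z_def by measurable
  have iv: "indep_var ?S X ?Z Z"
    unfolding X_def Z_def by (rule indep_var_restrict[OF ind]) auto
  have Fm2[measurable]: "(\<lambda>(\<omega>, z). F \<omega> (z n)) \<in> borel_measurable (?S \<Otimes>\<^sub>M ?Z)"
  proof -
    have "(\<lambda>(\<omega>, z). (\<omega>, z n)) \<in> measurable (?S \<Otimes>\<^sub>M ?Z) (?S \<Otimes>\<^sub>M borel)"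
      by measurable
    from measurable_comp[OF this Fm] show ?thesis by (simp add: comp_def case_prod_beta)
  qed
  have inner: "(\<integral>\<^sup>+z. F \<omega> (z n) \<partial>distr M ?Z Z) = (\<integral>\<^sup>+y. ennreal (exponential_density 1 y) * F \<omega> y \<partial>lborel)"
    if "\<omega> \<in> space ?S" for \<omega>
  proof -
    have Fo[measurable]: "F \<omega> \<in> borel_measurable borel"
      using that by measurable
    have "(\<integral>\<^sup>+z. F \<omega> (z n) \<partial>distr M ?Z Z) = (\<integral>\<^sup>+x. F \<omega> (E n x) \<partial>M)"
      by (subst nn_integral_distr) (auto simp: Z_def)
    also have "\<dots> = (\<integral>\<^sup>+y. ennreal (exponential_density 1 y) * F \<omega> y \<partial>lborel)"
      by (rule distributed_nn_integral[OF dist, symmetric]) simp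
    finally show ?thesis .
  qed
  have "(\<integral>\<^sup>+x. F (X x) (E n x) \<partial>M) = (\<integral>\<^sup>+x. (\<lambda>(\<omega>, z). F \<omega> (z n)) (X x, Z x) \<partial>M)"
    by (simp add: Z_def)
  also have "\<dots> = (\<integral>\<^sup>+p. (\<lambda>(\<omega>, z). F \<omega> (z n)) p \<partial>distr M (?S \<Otimes>\<^sub>M ?Z) (\<lambda>x. (X x, Z x)))"
    by (subst nn_integral_distr) auto
  also have "distr M (?S \<Otimes>\<^sub>M ?Z) (\<lambda>x. (X x, Z x)) = distr M ?S X \<Otimes>\<^sub>M distr M ?Z Z"
    using iv by (simp add: indep_var_distribution_eq)
  also have "(\<integral>\<^sup>+p. (\<lambda>(\<omega>, z). F \<omega> (z n)) p \<partial>(distr M ?S X \<Otimes>\<^sub>M distr M ?Z Z))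
      = (\<integral>\<^sup>+\<omega>. (\<integral>\<^sup>+z. F \<omega> (z n) \<partial>distr M ?Z Z) \<partial>distr M ?S X)"
  proof -
    interpret Y: sigma_finite_measure "distr M ?Z Z"
      by (rule prob_space_imp_sigma_finite, rule prob_space_distr) auto
    show ?thesis by (subst Y.nn_integral_fst[symmetric]) auto
  qed
  also have "\<dots> = (\<integral>\<^sup>+\<omega>. (\<integral>\<^sup>+y. ennreal (exponential_density 1 y) * F \<omega> y \<partial>lborel) \<partial>distr M ?S X)"
    by (rule nn_integral_cong) (simp add: inner)
  also have "\<dots> = (\<integral>\<^sup>+x. (\<integral>\<^sup>+y. ennreal (exponential_density 1 y) * F (X x) y \<partial>lborel) \<partial>M)"
    by (subst nn_integral_distr) auto
  finally show ?thesis unfolding X_def .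
qed

lemma AE_E_nonneg: "AE x in M. \<forall>i. 0 \<le> E i x"
proof -
  have "AE x in M. 0 \<le> E i x" for i
  proof -
    have "emeasure M (E i -` {..<0} \<inter> space M) = (\<integral>\<^sup>+x. ennreal (exponential_density 1 x) * indicator {..<0} x \<partial>lborel)"
      by (rule distributed_emeasure[OF dist]) simp
    also have "\<dots> = 0"
      by (intro nn_integral_zero') (auto simp: exponential_density_def indicator_def)
    finally have "emeasure M {x \<in> space M. E i x < 0} = 0"
      by (simp add: vimage_def Int_def conj_commute)
    then show ?thesis
      by (intro AE_I[where N="{x \<in> space M. E i x < 0}"]) auto
  qed
  then show ?thesis by (simp add: AE_all_countable)
qed

lemma nn_integral_prod_arrivals:
  fixes h \<Psi> :: "real \<Rightarrow> real"
  assumes h_nn: "\<And>t. 0 \<le> h t" and P_nn: "\<And>t. 0 \<le> \<Psi> t"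
    and hm[measurable]: "h \<in> borel_measurable borel" and Pm[measurable]: "\<Psi> \<in> borel_measurable borel"
    and shift: "\<And>r. 0 \<le> r \<Longrightarrow> (\<integral>\<^sup>+y. ennreal (exponential_density 1 y) * ennreal (h (r+y) * \<Psi> (r+y)) \<partial>lborel) = ennreal (\<Psi> r)"
  shows "(\<integral>\<^sup>+x. ennreal ((\<Prod>i<n. h (arrival i x)) * \<Psi> (gap_sum n x)) \<partial>M) = ennreal (\<Psi> 0)"
proof (induction n)
  case 0
  then show ?case by (simp add: emeasure_space_1)
next
  case (Suc n)
  define F where "F \<omega> y = ennreal ((\<Prod>i<n. h (\<Sum>j<Suc i. \<omega> j)) * h ((\<Sum>j<n. \<omega> j) + y) * \<Psi> ((\<Sum>j<n. \<omega> j) + y))"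
    for \<omega> :: "nat \<Rightarrow> real" and y :: real
  have [measurable]: "(\<lambda>\<omega>. \<Sum>j<k. \<omega> j) \<in> borel_measurable (PiM {..<n} (\<lambda>_. borel::real measure))"
    if "k \<le> n" for k
    using that by (intro borel_measurable_sum measurable_component_singleton) auto
  have Fm: "(\<lambda>(\<omega>, y). F \<omega> y) \<in> borel_measurable (PiM {..<n} (\<lambda>_. borel) \<Otimes>\<^sub>M borel)"
    unfolding F_def by measurable
  have "(\<integral>\<^sup>+x. ennreal ((\<Prod>i<Suc n. h (arrival i x)) * \<Psi> (arrival n x)) \<partial>M)
      = (\<integral>\<^sup>+x. F (\<lambda>i\<in>{..<n}. E i x) (E n x) \<partial>M)"
    by (intro nn_integral_cong) (simp add: F_def mult.assoc)
  also have "\<dots> = (\<integral>\<^sup>+x. (\<integral>\<^sup>+y. ennreal (exponential_density 1 y) * F (\<lambda>i\<in>{..<n}. E i x) y \<partial>lborel) \<partial>M)"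
    by (rule nn_integral_integrate_last[OF Fm])
  also have "\<dots> = (\<integral>\<^sup>+x. ennreal ((\<Prod>i<n. h (arrival i x)) * \<Psi> (gap_sum n x)) \<partial>M)"
  proof (rule nn_integral_cong_AE)
    show "AE x in M. (\<integral>\<^sup>+y. ennreal (exponential_density 1 y) * F (\<lambda>i\<in>{..<n}. E i x) y \<partial>lborel)
       = ennreal ((\<Prod>i<n. h (arrival i x)) * \<Psi> (gap_sum n x))"
      using AE_E_nonneg
    proof eventually_elim
      case (elim x)
      define r where "r = gap_sum n x"
      define c where "c = (\<Prod>i<n. h (arrival i x))"
      have r0: "0 \<le> r" unfolding r_def using elim by (intro sum_nonneg) auto
      have c0: "0 \<le> c" unfolding c_def using h_nn by (intro prod_nonneg) auto
      have "(\<integral>\<^sup>+y. ennreal (exponential_density 1 y) * F (\<lambda>i\<in>{..<n}. E i x) y \<partial>lborel)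
          = (\<integral>\<^sup>+y. ennreal c * (ennreal (exponential_density 1 y) * ennreal (h (r+y) * \<Psi> (r+y))) \<partial>lborel)"
        by (intro nn_integral_cong)
           (simp add: F_def c_def r_def ennreal_mult'[symmetric] h_nn P_nn c0 mult_ac prod_nonneg)
      also have "\<dots> = ennreal c * ennreal (\<Psi> r)"
        by (subst nn_integral_cmult) (auto simp: shift[OF r0])
      also have "\<dots> = ennreal (c * \<Psi> r)" using c0 by (simp add: ennreal_mult')
      finally show ?case by (simp only: c_def r_def)
    qed
  qed
  also have "\<dots> = ennreal (\<Psi> 0)" by (rule Suc.IH)
  finally show ?case .
qed

end

section \<open>Tail masses\<close>

locale tail_integrable =
  fixes g :: "real \<Rightarrow> real" and C :: real
  assumes g_nn: "\<And>t. 0 \<le> g t" and g_le: "\<And>t. g t \<le> C"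
    and g_neg: "\<And>t. t \<le> 0 \<Longrightarrow> g t = 0"
    and g_meas[measurable]: "g \<in> borel_measurable borel"
    and g_cont: "\<And>t. 0 < t \<Longrightarrow> isCont g t"
    and g_int: "integrable lborel g"
begin

definition tail_mass :: "real \<Rightarrow> real" where
  "tail_mass s = (LINT t|lborel. indicator {s..} t * g t)"

lemma integrable_indicator_mult: "integrable lborel (\<lambda>t. indicator A t * g t)" if "A \<in> sets borel"
proof -
  have "A \<in> sets lborel" using that by simp
  from integrable_real_mult_indicator[OF this g_int] show ?thesis by (simp add: mult.commute)
qed

lemma tail_mass_split:
  assumes "a \<le> u"
  shows "tail_mass a = (LBINT t=ereal a..ereal u. g t) + tail_mass u"
proof -
  have "AE t in lborel. t \<noteq> a" by (rule AE_lborel_singleton)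
  then have "(LINT t|lborel. indicator {a..} t * g t)
      = (LINT t|lborel. indicator {a<..<u} t * g t + indicator {u..} t * g t)"
    by (intro integral_cong_AE) (insert assms, auto elim!: eventually_mono simp: indicator_def)
  also have "\<dots> = (LINT t|lborel. indicator {a<..<u} t * g t) + (LINT t|lborel. indicator {u..} t * g t)"
    by (rule Bochner_Integration.integral_add; rule integrable_indicator_mult; simp)
  finally show ?thesis
    using assms by (simp add: tail_mass_def interval_lebesgue_integral_def set_lebesgue_integral_def)
qed

lemma tail_mass_nonneg: "0 \<le> tail_mass s"
  unfolding tail_mass_def by (intro integral_nonneg_AE) (auto simp: g_nn)

lemma bound_nonneg: "0 \<le> C" using g_nn[of 0] g_le[of 0] by simp

lemma interval_integral_bounds:
  assumes "a \<le> u"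
  shows "0 \<le> (LBINT t=ereal a..ereal u. g t)" "(LBINT t=ereal a..ereal u. g t) \<le> C * (u - a)"
proof -
  show "0 \<le> (LBINT t=ereal a..ereal u. g t)"
    using assms by (auto simp: interval_lebesgue_integral_def set_lebesgue_integral_def g_nn intro!: integral_nonneg_AE)
  have ii: "integrable lborel (indicator {a<..<u} :: real \<Rightarrow> real)"
    by (rule integrable_real_indicator) (use assms in auto)
  have "(LINT t|lborel. indicator {a<..<u} t * g t) \<le> (LINT t|lborel. C * indicator {a<..<u} t)"
    by (intro integral_mono integrable_indicator_mult integrable_mult_right ii) (auto simp: indicator_def g_le)
  also have "\<dots> = C * (u - a)" using assms by simp
  finally show "(LBINT t=ereal a..ereal u. g t) \<le> C * (u - a)"
    using assms by (simp add: interval_lebesgue_integral_def set_lebesgue_integral_def)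
qed

lemma tail_mass_antimono: "tail_mass u \<le> tail_mass a" if "a \<le> u"
  using tail_mass_split[OF that] interval_integral_bounds(1)[OF that] by simp

lemma tail_mass_le_zero: "tail_mass s \<le> tail_mass 0"
proof (cases "0 \<le> s")
  case False
  then have "(\<lambda>t. indicator {s..} t * g t) = (\<lambda>t. indicator {0..} t * g t)"
    using g_neg by (auto simp: fun_eq_iff indicator_def)
  then show ?thesis by (simp add: tail_mass_def)
qed (rule tail_mass_antimono)

lemma tail_mass_lipschitz: "\<bar>tail_mass x - tail_mass y\<bar> \<le> C * \<bar>x - y\<bar>"
proof -
  have *: "\<bar>tail_mass a - tail_mass u\<bar> \<le> C * \<bar>a - u\<bar>" if "a \<le> u" for a u
    using tail_mass_split[OF that] interval_integral_bounds[OF that] that by simp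
  show ?thesis
    by (cases "x \<le> y") (use *[of x y] *[of y x] in \<open>auto simp: abs_minus_commute\<close>)
qed

lemma continuous_on_tail_mass: "continuous_on UNIV tail_mass"
proof (rule lipschitz_on_continuous_on)
  show "C-lipschitz_on UNIV tail_mass"
    by (rule lipschitz_onI) (auto simp: dist_real_def tail_mass_lipschitz bound_nonneg)
qed

lemma isCont_tail_mass: "isCont tail_mass s"
  using continuous_on_tail_mass by (simp add: continuous_on_eq_continuous_at)

lemma tail_mass_measurable[measurable]: "tail_mass \<in> borel_measurable borel"
  using continuous_on_tail_mass by (rule borel_measurable_continuous_onI)

lemma tail_mass_has_derivative:
  assumes s: "0 < s"
  shows "(tail_mass has_real_derivative - g s) (at s)"
proof -
  define a where "a = s / 2"
  define b where "b = 2 * s"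
  have ab: "0 < a" "a < s" "s < b" using s by (auto simp: a_def b_def)
  have cont: "continuous_on {a..b} g"
    using ab by (intro continuous_at_imp_continuous_on ballI g_cont) auto
  have "((\<lambda>u. LBINT y=a..u. g y) has_vector_derivative (g s)) (at s within {a..b})"
    by (rule interval_integral_FTC2[OF order_refl _ cont]) (use ab in auto)
  then have "((\<lambda>u. LBINT y=a..u. g y) has_real_derivative (g s)) (at s)"
    using ab by (simp add: has_real_derivative_iff_has_vector_derivative at_within_Icc_at)
  then have d: "((\<lambda>u. tail_mass a - (LBINT y=a..u. g y)) has_real_derivative - g s) (at s)"
    by (intro derivative_eq_intros) auto
  show ?thesis
  proof (rule has_field_derivative_transform_within_open[OF d, of "{a<..}"])
    fix u assume "u \<in> {a<..}"
    then show "tail_mass a - (LBINT y=a..u. g y) = tail_mass u" using tail_mass_split[of a u] by simp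
  qed (use ab in auto)
qed

lemma tail_mass_at_top: "(tail_mass \<longlongrightarrow> 0) at_top"
proof -
  have int0: "set_integrable lborel {0..} g"
  proof -
    have "integrable lborel (\<lambda>t. indicator {0..} t * g t)" by (rule integrable_indicator_mult) (rule atLeast_borel)
    then show ?thesis unfolding set_integrable_def by (simp add: mult.commute)
  qed
  have lim: "((\<lambda>b. set_lebesgue_integral lborel {0..b} g) \<longlongrightarrow> set_lebesgue_integral lborel {0..} g) at_top"
    by (rule tendsto_set_lebesgue_integral_at_top[OF _ int0]) simp
  have eq: "tail_mass b = tail_mass 0 - set_lebesgue_integral lborel {0..b} g" if "0 \<le> b" for b
  proof -
    have "AE t in lborel. t \<noteq> b" by (rule AE_lborel_singleton)
    then have ae: "AE t in lborel. indicator {0..b} t *\<^sub>R g t = indicator {0<..<b} t *\<^sub>R g t"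
    proof (rule eventually_mono)
      fix t assume "t \<noteq> b"
      then show "indicator {0..b} t *\<^sub>R g t = indicator {0<..<b} t *\<^sub>R g t"
        by (cases "t = 0") (auto simp: indicator_def g_neg[of 0, simplified])
    qed
    have "set_lebesgue_integral lborel {0..b} g = set_lebesgue_integral lborel {0<..<b} g"
      unfolding set_lebesgue_integral_def by (rule integral_cong_AE[OF _ _ ae]) measurable
    also have "\<dots> = (LBINT t=ereal 0..ereal b. g t)"
      using that by (simp add: interval_lebesgue_integral_def)
    finally have "set_lebesgue_integral lborel {0..b} g = (LBINT t=ereal 0..ereal b. g t)" .
    then show ?thesis using tail_mass_split[OF that] by simp
  qed
  have "tail_mass 0 = set_lebesgue_integral lborel {0..} g"
    unfolding tail_mass_def set_lebesgue_integral_def by (simp add: mult.commute)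
  have "((\<lambda>b. tail_mass 0 - set_lebesgue_integral lborel {0..b} g) \<longlongrightarrow> tail_mass 0 - set_lebesgue_integral lborel {0..} g) at_top"
    by (rule tendsto_diff[OF tendsto_const lim])
  then have "((\<lambda>b. tail_mass 0 - set_lebesgue_integral lborel {0..b} g) \<longlongrightarrow> 0) at_top"
    unfolding \<open>tail_mass 0 = set_lebesgue_integral lborel {0..} g\<close> diff_self .
  then show ?thesis
  proof (rule Lim_transform_eventually)
    show "\<forall>\<^sub>F b in at_top. tail_mass 0 - set_lebesgue_integral lborel {0..b} g = tail_mass b"
      unfolding eventually_at_top_linorder by (intro exI[of _ 0] allI impI) (rule eq[symmetric])
  qed
qed

end

context exp_arrivals
begin

lemma nn_integral_prod_one_minus:
  assumes tf: "tail_integrable g C" and g1: "\<And>t. g t \<le> 1"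
  shows "(\<integral>\<^sup>+x. ennreal ((\<Prod>i<n. (1 - g (arrival i x))) * exp (- tail_integrable.tail_mass g (gap_sum n x))) \<partial>M)
         = ennreal (exp (- tail_integrable.tail_mass g 0))"
proof -
  interpret tail_integrable g C by (rule tf)
  let ?h = "\<lambda>t. 1 - g t" and ?P = "\<lambda>t. exp (- tail_mass t)"
  have key: "(\<integral>\<^sup>+y. ennreal (exponential_density 1 y) * ennreal (?h (r+y) * ?P (r+y)) \<partial>lborel) = ennreal (?P r)"
    if "0 \<le> r" for r
  proof (rule nn_integral_exponential_shift[where B=1])
    show "isCont ?h t" if "0 < t" for t using g_cont[OF that] by (intro continuous_intros)
    show "(?P has_real_derivative (1 - ?h t) * ?P t) (at t)" if "0 < t" for t
      by (rule derivative_eq_intros tail_mass_has_derivative[OF that] refl)+ simp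
    show "(?P \<longlongrightarrow> ?P 0) (at_right 0)"
      using isCont_tail_mass[of 0] by (intro tendsto_intros) (simp add: isCont_def filterlim_at_split)
    show "?P t \<le> 1" for t using tail_mass_nonneg[of t] by simp
  qed (use that g1 in auto)
  show ?thesis
    by (rule nn_integral_prod_arrivals[where h="?h" and \<Psi>="?P", OF _ _ _ _ key]) (use g1 in auto)
qed

lemma nn_integral_prod_one_plus:
  assumes tf: "tail_integrable g C"
  shows "(\<integral>\<^sup>+x. ennreal ((\<Prod>i<n. (1 + g (arrival i x))) * exp (tail_integrable.tail_mass g (gap_sum n x))) \<partial>M)
         = ennreal (exp (tail_integrable.tail_mass g 0))"
proof -
  interpret tail_integrable g C by (rule tf)
  let ?h = "\<lambda>t. 1 + g t" and ?P = "\<lambda>t. exp (tail_mass t)"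
  have key: "(\<integral>\<^sup>+y. ennreal (exponential_density 1 y) * ennreal (?h (r+y) * ?P (r+y)) \<partial>lborel) = ennreal (?P r)"
    if "0 \<le> r" for r
  proof (rule nn_integral_exponential_shift[where B="exp (tail_mass 0)"])
    show "isCont ?h t" if "0 < t" for t using g_cont[OF that] by (intro continuous_intros)
    show "(?P has_real_derivative (1 - ?h t) * ?P t) (at t)" if "0 < t" for t
      by (rule derivative_eq_intros tail_mass_has_derivative[OF that] refl)+ simp
    show "(?P \<longlongrightarrow> ?P 0) (at_right 0)"
      using isCont_tail_mass[of 0] by (intro tendsto_intros) (simp add: isCont_def filterlim_at_split)
    show "?P t \<le> exp (tail_mass 0)" for t using tail_mass_le_zero[of t] by simp
    show "0 \<le> ?h t" for t using g_nn[of t] by simp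
  qed (use that in auto)
  have hnn: "0 \<le> ?h t" for t using g_nn[of t] by simp
  show ?thesis
    by (rule nn_integral_prod_arrivals[where h="?h" and \<Psi>="?P", OF hnn _ _ _ key]) auto
qed

lemma nn_integral_two_pow_exp_neg_gap_sum:
  "(\<integral>\<^sup>+x. ennreal (2 ^ n * exp (- max (gap_sum n x) 0)) \<partial>M) = 1"
proof -
  let ?h = "\<lambda>t::real. 2::real" and ?P = "\<lambda>t::real. exp (- max t 0)"
  have key: "(\<integral>\<^sup>+y. ennreal (exponential_density 1 y) * ennreal (?h (r+y) * ?P (r+y)) \<partial>lborel) = ennreal (?P r)"
    if "0 \<le> r" for r
  proof (rule nn_integral_exponential_shift[where B=1])
    show "(?P has_real_derivative (1 - ?h t) * ?P t) (at t)" if "0 < t" for t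
    proof -
      have "((\<lambda>t. exp (- t)) has_real_derivative (1 - ?h t) * ?P t) (at t)"
        using that by (auto intro!: derivative_eq_intros)
      then show ?thesis
        by (rule has_field_derivative_transform_within_open[where S="{0<..}"]) (use that in auto)
    qed
    show "(?P \<longlongrightarrow> ?P 0) (at_right 0)"
      by (intro tendsto_intros tendsto_ident_at)
  qed (use that in \<open>auto simp: continuous_on_def\<close>)
  have "(\<integral>\<^sup>+x. ennreal ((\<Prod>i<n. ?h (arrival i x)) * ?P (gap_sum n x)) \<partial>M) = ennreal (?P 0)"
    by (rule nn_integral_prod_arrivals[where h="?h" and \<Psi>="?P", OF _ _ _ _ key]) auto
  then show ?thesis by simp
qed

lemma AE_partial_sums_nonneg: "AE x in M. \<forall>n. 0 \<le> gap_sum n x"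
  using AE_E_nonneg by eventually_elim (auto intro: sum_nonneg)

lemma prob_gap_sum_less: "prob {x\<in>space M. gap_sum n x < R} \<le> exp R / 2 ^ n"
proof -
  let ?w = "\<lambda>x. 2 ^ n * exp (- max (gap_sum n x) 0)"
  have "emeasure M {x\<in>space M. gap_sum n x < R} = (\<integral>\<^sup>+x. indicator {x\<in>space M. gap_sum n x < R} x \<partial>M)"
    by simp
  also have "\<dots> \<le> (\<integral>\<^sup>+x. ennreal (exp R / 2 ^ n) * ennreal (?w x) \<partial>M)"
  proof (rule nn_integral_mono_AE)
    show "AE x in M. indicator {x\<in>space M. gap_sum n x < R} x \<le> ennreal (exp R / 2 ^ n) * ennreal (?w x)"
      using AE_partial_sums_nonneg
    proof eventually_elim
      case (elim x)
      have "1 \<le> exp R / 2 ^ n * ?w x" if "gap_sum n x < R"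
        using elim that by (simp add: exp_minus field_simps)
      then show ?case
        by (auto simp: indicator_def ennreal_mult'[symmetric] intro: ennreal_leI)
    qed
  qed
  also have "\<dots> = ennreal (exp R / 2 ^ n)"
    by (subst nn_integral_cmult) (auto simp: nn_integral_two_pow_exp_neg_gap_sum)
  finally show ?thesis
    by (simp add: emeasure_eq_measure)
qed

lemma integral_prod_one_minus_exp_tail_mass:
  assumes tf: "tail_integrable g C" and g1: "\<And>t. g t \<le> 1"
  shows "(\<integral>x. (\<Prod>i<n. 1 - g (arrival i x)) * exp (- tail_integrable.tail_mass g (gap_sum n x)) \<partial>M)
         = exp (- tail_integrable.tail_mass g 0)"
proof -
  interpret tail_integrable g C by (rule tf)
  let ?f = "\<lambda>x. (\<Prod>i<n. 1 - g (arrival i x)) * exp (- tail_mass (gap_sum n x))"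
  have "0 \<le> (\<Prod>i<n. 1 - g (arrival i x))" "(\<Prod>i<n. 1 - g (arrival i x)) \<le> 1" for x
    using g1 g_nn by (auto intro: prod_nonneg prod_le_1)
  then have f01: "0 \<le> ?f x" "?f x \<le> 1" for x
    using tail_mass_nonneg[of "gap_sum n x"] by (auto intro: mult_le_one)
  have "norm (?f x) \<le> 1" for x
    using f01[of x] by (metis abs_of_nonneg real_norm_def)
  then have int: "integrable M ?f"
    by (intro integrable_const_bound[where B=1]) auto
  have "ennreal (\<integral>x. ?f x \<partial>M) = ennreal (exp (- tail_mass 0))"
    using nn_integral_eq_integral[OF int] nn_integral_prod_one_minus[OF tf g1, of n] f01 by simp
  then show ?thesis
    using integral_nonneg_AE[of ?f M] f01 by simp
qed

lemma integral_prod_one_minus_bounds: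
  assumes tf: "tail_integrable g C" and g1: "\<And>t. g t \<le> 1"
  defines "P n x \<equiv> \<Prod>i<n. 1 - g (arrival i x)"
  shows "exp (- tail_integrable.tail_mass g 0) \<le> (\<integral>x. P n x \<partial>M)"
    and "(\<integral>x. P n x \<partial>M) \<le> exp (- tail_integrable.tail_mass g 0) + tail_integrable.tail_mass g R + exp R / 2 ^ n"
proof -
  interpret tail_integrable g C by (rule tf)
  define \<Psi> where "\<Psi> t = exp (- tail_mass t)" for t
  define I :: "'a \<Rightarrow> real" where "I = indicator {x\<in>space M. gap_sum n x < R}"
  have [measurable]: "P n \<in> borel_measurable M" unfolding P_def by measurable
  have P01: "0 \<le> P n x" "P n x \<le> 1" for x
    unfolding P_def using g1 g_nn by (auto intro: prod_nonneg prod_le_1)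
  have \<Psi>01: "0 \<le> \<Psi> t" "\<Psi> t \<le> 1" for t unfolding \<Psi>_def using tail_mass_nonneg[of t] by auto
  have bounded: "integrable M f" if [measurable]: "f \<in> borel_measurable M"
    and "\<And>x. 0 \<le> f x" "\<And>x. f x \<le> 1" for f :: "'a \<Rightarrow> real"
    by (rule integrable_const_bound[where B=1]) (use that in auto)
  have int: "integrable M (P n)" "integrable M (\<lambda>x. P n x * \<Psi> (gap_sum n x))"
    "integrable M (\<lambda>x. P n x * (1 - \<Psi> (gap_sum n x)))"
    using P01 \<Psi>01 by (intro bounded; simp add: \<Psi>_def mult_le_one)+
  have eq: "(\<integral>x. P n x * \<Psi> (gap_sum n x) \<partial>M) = \<Psi> 0"
    unfolding P_def \<Psi>_def by (rule integral_prod_one_minus_exp_tail_mass[OF tf g1])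
  show "exp (- tail_mass 0) \<le> (\<integral>x. P n x \<partial>M)"
    unfolding \<Psi>_def[symmetric] eq[symmetric]
    by (intro integral_mono int) (auto intro: mult_left_le P01 \<Psi>01)
  \<comment> \<open>Where the last arrival is beyond \<open>R\<close>, \<open>1 - \<Psi> \<le> tail_mass\<close> is small; the rest has small probability.\<close>
  have "P n x * (1 - \<Psi> u) \<le> tail_mass R + I x" if "x \<in> space M" and u: "u = gap_sum n x" for x u
  proof -
    have "P n x * (1 - \<Psi> u) \<le> 1 - \<Psi> u"
      using P01 \<Psi>01[of u] by (intro mult_left_le_one_le) auto
    moreover have "1 - \<Psi> u \<le> tail_mass u"
      using exp_ge_add_one_self[of "- tail_mass u"] unfolding \<Psi>_def by simp
    ultimately show ?thesis
      using that \<Psi>01[of u] tail_mass_nonneg[of R] tail_mass_antimono[of R u]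
      by (cases "u < R") (auto simp: I_def)
  qed
  then have "(\<integral>x. P n x * (1 - \<Psi> (gap_sum n x)) \<partial>M) \<le> (\<integral>x. tail_mass R + I x \<partial>M)"
    by (intro integral_mono int) (auto simp: I_def less_top[symmetric])
  also have "\<dots> = tail_mass R + prob {x\<in>space M. gap_sum n x < R}"
    by (subst Bochner_Integration.integral_add) (auto simp: I_def less_top[symmetric] prob_space)
  finally have "(\<integral>x. P n x * (1 - \<Psi> (gap_sum n x)) \<partial>M) \<le> tail_mass R + exp R / 2 ^ n"
    using prob_gap_sum_less[of n R] by simp
  moreover have "(\<integral>x. P n x \<partial>M) = \<Psi> 0 + (\<integral>x. P n x * (1 - \<Psi> (gap_sum n x)) \<partial>M)"
    using int by (simp add: eq[symmetric] algebra_simps)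
  ultimately show "(\<integral>x. P n x \<partial>M) \<le> exp (- tail_mass 0) + tail_mass R + exp R / 2 ^ n"
    by (simp add: \<Psi>_def)
qed

lemma integral_prod_one_minus_tendsto:
  assumes tf: "tail_integrable g C" and g1: "\<And>t. g t \<le> 1"
  shows "(\<lambda>n. \<integral>x. (\<Prod>i<n. 1 - g (arrival i x)) \<partial>M) \<longlonglongrightarrow> exp (- tail_integrable.tail_mass g 0)"
proof (rule LIMSEQ_I)
  interpret tail_integrable g C by (rule tf)
  fix r :: real assume r: "0 < r"
  have "\<forall>\<^sub>F R in at_top. tail_mass R < r / 2"
    using tail_mass_at_top r by (intro order_tendstoD) auto
  then obtain R where R: "tail_mass R < r / 2"
    by (auto simp: eventually_at_top_linorder)
  have "(\<lambda>n. exp R / 2 ^ n) \<longlonglongrightarrow> 0"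
    by (intro LIMSEQ_divide_realpow_zero) auto
  then have "\<forall>\<^sub>F n in sequentially. exp R / 2 ^ n < r / 2"
    using r by (intro order_tendstoD) auto
  then obtain N where N: "\<And>n. n \<ge> N \<Longrightarrow> exp R / 2 ^ n < r / 2"
    by (auto simp: eventually_sequentially)
  show "\<exists>N. \<forall>n\<ge>N. norm ((\<integral>x. (\<Prod>i<n. 1 - g (arrival i x)) \<partial>M) - exp (- tail_mass 0)) < r"
  proof (intro exI allI impI)
    fix n assume "N \<le> n"
    let ?I = "\<integral>x. (\<Prod>i<n. 1 - g (arrival i x)) \<partial>M"
    have "exp (- tail_mass 0) \<le> ?I" "?I \<le> exp (- tail_mass 0) + tail_mass R + exp R / 2 ^ n"
      by (rule integral_prod_one_minus_bounds[OF tf g1])+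
    then show "norm (?I - exp (- tail_mass 0)) < r"
      using R N[OF \<open>N \<le> n\<close>] unfolding real_norm_def by arith
  qed
qed

end

section \<open>The Laplace transform\<close>

lemma one_minus_exp_as_integral:
  assumes "0 \<le> y"
  shows "ennreal (1 - exp (- y)) = (\<integral>\<^sup>+z. ennreal (exponential_density 1 z) * indicator {..y} z \<partial>lborel)"
  using nn_integral_erlang_density[of 1 0 y] assms by (simp add: erlang_CDF_def)

lemma le_mult_powr_neg_iff:
  fixes t z w \<alpha> :: real
  assumes "0 < t" "0 < z" "0 < w" "0 < \<alpha>"
  shows "z \<le> w * t powr (-\<alpha>) \<longleftrightarrow> t \<le> (w / z) powr (1 / \<alpha>)"
proof -
  have "z \<le> w * t powr (-\<alpha>) \<longleftrightarrow> t powr \<alpha> \<le> w / z"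
    using assms by (simp add: powr_minus field_simps)
  also have "\<dots> \<longleftrightarrow> (t powr \<alpha>) powr (1/\<alpha>) \<le> (w / z) powr (1 / \<alpha>)"
  proof
    assume "t powr \<alpha> \<le> w / z"
    then show "(t powr \<alpha>) powr (1/\<alpha>) \<le> (w / z) powr (1 / \<alpha>)"
      using assms by (intro powr_mono2) auto
  next
    assume h: "(t powr \<alpha>) powr (1/\<alpha>) \<le> (w / z) powr (1 / \<alpha>)"
    have "((t powr \<alpha>) powr (1/\<alpha>)) powr \<alpha> \<le> ((w / z) powr (1 / \<alpha>)) powr \<alpha>"
      by (rule powr_mono2[OF _ _ h]) (use assms in auto)
    moreover have "((t powr \<alpha>) powr (1/\<alpha>)) powr \<alpha> = t powr \<alpha>"
      using assms by (simp add: powr_powr)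
    moreover have "((w / z) powr (1 / \<alpha>)) powr \<alpha> = w / z"
      using assms by (simp add: powr_powr)
    ultimately show "t powr \<alpha> \<le> w / z" by simp
  qed
  also have "(t powr \<alpha>) powr (1/\<alpha>) = t"
    using assms by (simp add: powr_powr)
  finally show ?thesis .
qed

lemma nn_integral_powr_neg_sublevel:
  fixes c z w \<alpha> :: real
  assumes "0 \<le> c" "0 < z" "0 < w" "0 < \<alpha>"
  shows "(\<integral>\<^sup>+t. ennreal (if 0 < t \<and> z \<le> w * t powr (-\<alpha>) then c else 0) \<partial>lborel)
       = ennreal c * ennreal ((w / z) powr (1 / \<alpha>))"
proof -
  have "(\<integral>\<^sup>+t. ennreal (if 0 < t \<and> z \<le> w * t powr (-\<alpha>) then c else 0) \<partial>lborel)
      = (\<integral>\<^sup>+t. ennreal c * indicator {0<..(w / z) powr (1 / \<alpha>)} t \<partial>lborel)"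
    using assms by (intro nn_integral_cong) (auto simp: indicator_def le_mult_powr_neg_iff)
  then show ?thesis
    by (simp add: nn_integral_cmult_indicator)
qed

lemma nn_integral_laplace_g:
  fixes w \<alpha> :: real
  assumes w: "0 < w" and a: "1 < \<alpha>"
  shows "(\<integral>\<^sup>+t. ennreal (if t \<le> 0 then 0 else 1 - exp (- w * t powr (-\<alpha>))) \<partial>lborel)
       = ennreal (w powr (1/\<alpha>) * Gamma (1 - 1/\<alpha>))"
proof -
  let ?d = "\<lambda>z. ennreal (exponential_density 1 z)"
  have "(\<integral>\<^sup>+t. ennreal (if t \<le> 0 then 0 else 1 - exp (- w * t powr (-\<alpha>))) \<partial>lborel)
      = (\<integral>\<^sup>+t. (\<integral>\<^sup>+z. ennreal (if 0 < t \<and> z \<le> w * t powr (-\<alpha>) then exponential_density 1 z else 0) \<partial>lborel) \<partial>lborel)"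
  proof (rule nn_integral_cong)
    fix t :: real
    show "ennreal (if t \<le> 0 then 0 else 1 - exp (- w * t powr (-\<alpha>)))
      = (\<integral>\<^sup>+z. ennreal (if 0 < t \<and> z \<le> w * t powr (-\<alpha>) then exponential_density 1 z else 0) \<partial>lborel)"
    proof (cases "t \<le> 0")
      case True then show ?thesis by simp
    next
      case False
      then have "ennreal (1 - exp (- (w * t powr (-\<alpha>)))) = (\<integral>\<^sup>+z. ?d z * indicator {..w * t powr (-\<alpha>)} z \<partial>lborel)"
        using w by (intro one_minus_exp_as_integral) simp
      also have "\<dots> = (\<integral>\<^sup>+z. ennreal (if 0 < t \<and> z \<le> w * t powr (-\<alpha>) then exponential_density 1 z else 0) \<partial>lborel)"
        using False by (intro nn_integral_cong) (auto simp: indicator_def)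
      finally show ?thesis using False by simp
    qed
  qed
  also have "\<dots> = (\<integral>\<^sup>+z. (\<integral>\<^sup>+t. ennreal (if 0 < t \<and> z \<le> w * t powr (-\<alpha>) then exponential_density 1 z else 0) \<partial>lborel) \<partial>lborel)"
    by (rule lborel_pair.Fubini'[symmetric]) measurable
  also have "\<dots> = (\<integral>\<^sup>+z. ennreal (indicator {0..} z * w powr (1/\<alpha>) * z powr (1 - 1/\<alpha> - 1) / exp z) \<partial>lborel)"
  proof (rule nn_integral_cong_AE)
    show "AE z in lborel. (\<integral>\<^sup>+t. ennreal (if 0 < t \<and> z \<le> w * t powr (-\<alpha>) then exponential_density 1 z else 0) \<partial>lborel)
        = ennreal (indicator {0..} z * w powr (1/\<alpha>) * z powr (1 - 1/\<alpha> - 1) / exp z)"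
      using AE_lborel_singleton[of 0]
    proof eventually_elim
      case (elim z)
      show ?case
      proof (cases "z < 0")
        case True
        then have "exponential_density 1 z = 0" by (simp add: exponential_density_def)
        then have "(\<lambda>t. ennreal (if 0 < t \<and> z \<le> w * t powr (-\<alpha>) then exponential_density 1 z else 0)) = (\<lambda>t. 0)"
          by auto
        then show ?thesis using True by simp
      next
        case False
        with elim have z: "0 < z" by simp
        have "(\<integral>\<^sup>+t. ennreal (if 0 < t \<and> z \<le> w * t powr (-\<alpha>) then exponential_density 1 z else 0) \<partial>lborel)
            = ennreal (exp (- z)) * ennreal ((w / z) powr (1 / \<alpha>))"
          using z w a by (simp add: nn_integral_powr_neg_sublevel exponential_density_def)
        also have "\<dots> = ennreal (indicator {0..} z * w powr (1/\<alpha>) * z powr (1 - 1/\<alpha> - 1) / exp z)"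
          using z w by (simp add: ennreal_mult'[symmetric] powr_divide powr_minus exp_minus field_simps)
        finally show ?thesis .
      qed
    qed
  qed
  also have "\<dots> = ennreal (w powr (1/\<alpha>)) * (\<integral>\<^sup>+z. ennreal (indicator {0..} z * z powr (1 - 1/\<alpha> - 1) / exp z) \<partial>lborel)"
    by (subst nn_integral_cmult[symmetric]) (auto intro!: nn_integral_cong simp: ennreal_mult'[symmetric] indicator_def)
  also have "(\<integral>\<^sup>+z. ennreal (indicator {0..} z * z powr (1 - 1/\<alpha> - 1) / exp z) \<partial>lborel) = Gamma (1 - 1/\<alpha>)"
    using a by (subst Gamma_conv_nn_integral_real) (auto simp: field_simps)
  finally show ?thesis using w by (simp add: ennreal_mult')
qed

lemma tail_integrable_of_nn_integral:
  fixes g :: "real \<Rightarrow> real"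
  assumes nn: "\<And>t. 0 \<le> g t" and le: "\<And>t. g t \<le> C" and neg: "\<And>t. t \<le> 0 \<Longrightarrow> g t = 0"
    and m[measurable]: "g \<in> borel_measurable borel" and c: "\<And>t. 0 < t \<Longrightarrow> isCont g t"
    and V: "(\<integral>\<^sup>+t. ennreal (g t) \<partial>lborel) = ennreal V" and V0: "0 \<le> V"
  shows "tail_integrable g C" "tail_integrable.tail_mass g 0 = V"
proof -
  have int: "integrable lborel g"
    by (rule integrableI_nonneg) (auto simp: nn V)
  show tf: "tail_integrable g C"
    by unfold_locales (auto simp: nn le neg c int)
  have "(\<lambda>t. indicator {0..} t * g t) = g"
    by (auto simp: fun_eq_iff indicator_def neg)
  then have "tail_integrable.tail_mass g 0 = (LINT t|lborel. g t)"
    by (simp add: tail_integrable.tail_mass_def[OF tf])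
  also have "ennreal (LINT t|lborel. g t) = ennreal V"
    using nn_integral_eq_integral[OF int] V nn by simp
  then have "(LINT t|lborel. g t) = V"
    using V0 integral_nonneg_AE[of g lborel] nn by simp
  finally show "tail_integrable.tail_mass g 0 = V" .
qed

definition laplace_g :: "real \<Rightarrow> real \<Rightarrow> real \<Rightarrow> real" where
  "laplace_g w \<alpha> t = (if t \<le> 0 then 0 else 1 - exp (- w * t powr (-\<alpha>)))"

lemma laplace_g_nonneg: "0 < w \<Longrightarrow> 0 \<le> laplace_g w \<alpha> t"
  by (auto simp: laplace_g_def)

lemma laplace_g_le_one: "laplace_g w \<alpha> t \<le> 1"
  by (auto simp: laplace_g_def)

lemma one_minus_laplace_g: "0 \<le> t \<Longrightarrow> 1 - laplace_g w \<alpha> t = exp (- w * t powr (-\<alpha>))"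
  by (auto simp: laplace_g_def)

lemma laplace_g_measurable[measurable]: "laplace_g w \<alpha> \<in> borel_measurable borel"
  unfolding laplace_g_def[abs_def] by measurable

lemma isCont_laplace_g:
  assumes "0 < t"
  shows "isCont (laplace_g w \<alpha>) t"
proof -
  have "eventually (\<lambda>x. laplace_g w \<alpha> x = 1 - exp (- w * x powr (-\<alpha>))) (nhds t)"
    using eventually_nhds_in_open[of "{0<..}" t] assms
    by (auto elim!: eventually_mono simp: laplace_g_def)
  moreover have "isCont (\<lambda>x. 1 - exp (- w * x powr (-\<alpha>))) t"
    using assms by (intro continuous_intros) auto
  ultimately show ?thesis
    by (simp add: isCont_cong)
qed

lemma tail_integrable_laplace_g:
  assumes w: "0 < w" and a: "1 < \<alpha>"
  shows "tail_integrable (laplace_g w \<alpha>) 1"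
    and "tail_integrable.tail_mass (laplace_g w \<alpha>) 0 = w powr (1/\<alpha>) * Gamma (1 - 1/\<alpha>)"
proof -
  have V0: "0 \<le> w powr (1/\<alpha>) * Gamma (1 - 1/\<alpha>)"
    using a by (intro mult_nonneg_nonneg) (auto intro: less_imp_le Gamma_real_pos simp: field_simps)
  have V: "(\<integral>\<^sup>+t. ennreal (laplace_g w \<alpha> t) \<partial>lborel) = ennreal (w powr (1/\<alpha>) * Gamma (1 - 1/\<alpha>))"
    using nn_integral_laplace_g[OF w a] unfolding laplace_g_def .
  show "tail_integrable (laplace_g w \<alpha>) 1"
    and "tail_integrable.tail_mass (laplace_g w \<alpha>) 0 = w powr (1/\<alpha>) * Gamma (1 - 1/\<alpha>)"
    by (rule tail_integrable_of_nn_integral[OF laplace_g_nonneg[OF w] laplace_g_le_one _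
          laplace_g_measurable isCont_laplace_g V V0]; simp add: laplace_g_def)+
qed

lemma exp_partial_sums_tendsto:
  fixes a :: "nat \<Rightarrow> real" and w :: real
  assumes a0: "\<And>i. 0 \<le> a i" and w: "0 < w"
  shows "(\<lambda>n. exp (- w * (\<Sum>i<n. a i))) \<longlonglongrightarrow> (if summable a then exp (- w * suminf a) else 0)"
proof (cases "summable a")
  case True
  then show ?thesis by (simp add: summable_LIMSEQ tendsto_intros)
next
  case False
  have inc: "(\<Sum>i<m. a i) \<le> (\<Sum>i<n. a i)" if "m \<le> n" for m n
    using that a0 by (intro sum_mono2) auto
  have unb: "\<exists>n. B < (\<Sum>i<n. a i)" for B
  proof (rule ccontr)
    assume "\<not> ?thesis"
    then have "\<And>n. (\<Sum>i<n. a i) \<le> B" by (auto simp: not_less)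
    then have "summable a" by (intro summableI_nonneg_bounded[of a B]) (auto simp: a0)
    with False show False by simp
  qed
  have lim: "filterlim (\<lambda>n. \<Sum>i<n. a i) at_top sequentially"
  proof (subst filterlim_at_top, intro allI)
    fix B
    obtain N where "B < (\<Sum>i<N. a i)" using unb by blast
    then show "eventually (\<lambda>n. B \<le> (\<Sum>i<n. a i)) sequentially"
      unfolding eventually_sequentially by (intro exI[of _ N] allI impI) (use inc in force)
  qed
  have "((\<lambda>x. exp (- w * x)) \<longlongrightarrow> 0) at_top"
    using w by real_asymp
  from filterlim_compose[OF this lim] False show ?thesis by simp
qed

context exp_arrivals
begin

definition inv_power_sum :: "real \<Rightarrow> 'a \<Rightarrow> real" where
  "inv_power_sum \<alpha> x = (\<Sum>i. arrival i x powr (-\<alpha>))"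

lemma inv_power_sum_measurable[measurable]: "inv_power_sum \<alpha> \<in> borel_measurable M"
  unfolding inv_power_sum_def by measurable

text \<open>The limit always exists (it is 0 when the series diverges), and the limit form makes
  measurability automatic.\<close>
definition laplace_kernel :: "real \<Rightarrow> real \<Rightarrow> 'a \<Rightarrow> real" where
  "laplace_kernel \<alpha> w x = lim (\<lambda>n. exp (- w * (\<Sum>i<n. arrival i x powr (-\<alpha>))))"

lemma laplace_kernel_eq:
  assumes "0 < w"
  shows "laplace_kernel \<alpha> w x = (if summable (\<lambda>i. arrival i x powr (-\<alpha>)) then exp (- w * inv_power_sum \<alpha> x) else 0)"
  unfolding laplace_kernel_def inv_power_sum_def by (rule limI, rule exp_partial_sums_tendsto) (auto simp: assms)

lemma laplace_kernel_measurable[measurable]: "laplace_kernel \<alpha> w \<in> borel_measurable M"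
  unfolding laplace_kernel_def by measurable

lemma inv_power_sum_nonneg: "summable (\<lambda>i. arrival i x powr (-\<alpha>)) \<Longrightarrow> 0 \<le> inv_power_sum \<alpha> x"
  unfolding inv_power_sum_def by (intro suminf_nonneg) auto

lemma laplace_kernel_bounds: "0 < w \<Longrightarrow> 0 \<le> laplace_kernel \<alpha> w x \<and> laplace_kernel \<alpha> w x \<le> 1"
  using inv_power_sum_nonneg[of x \<alpha>] by (auto simp: laplace_kernel_eq)

lemma integral_laplace_kernel:
  assumes w: "0 < w" and a: "1 < \<alpha>"
  shows "(\<integral>x. laplace_kernel \<alpha> w x \<partial>M) = exp (- (w powr (1/\<alpha>)) * Gamma (1 - 1/\<alpha>))"
proof -
  note g = tail_integrable_laplace_g[OF w a]
  define P where "P n x = (\<Prod>i<n. (1 - laplace_g w \<alpha> (arrival i x)))" for n x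
  have Pm: "P n \<in> borel_measurable M" for n
    unfolding P_def by measurable
  have lim1: "(\<lambda>n. \<integral>x. P n x \<partial>M) \<longlonglongrightarrow> exp (- tail_integrable.tail_mass (laplace_g w \<alpha>) 0)"
    unfolding P_def by (rule integral_prod_one_minus_tendsto[OF g(1) laplace_g_le_one])
  have lim2: "(\<lambda>n. \<integral>x. P n x \<partial>M) \<longlonglongrightarrow> (\<integral>x. laplace_kernel \<alpha> w x \<partial>M)"
  proof (rule integral_dominated_convergence[where w="\<lambda>_. 1"])
    show "AE x in M. (\<lambda>n. P n x) \<longlonglongrightarrow> laplace_kernel \<alpha> w x"
      using AE_E_nonneg
    proof eventually_elim
      case (elim x)
      have Pe: "P n x = exp (- w * (\<Sum>i<n. arrival i x powr (-\<alpha>)))" for n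
      proof -
        have "P n x = (\<Prod>i<n. exp (- w * arrival i x powr (-\<alpha>)))"
          unfolding P_def using elim by (intro prod.cong refl one_minus_laplace_g sum_nonneg) auto
        also have "\<dots> = exp (\<Sum>i<n. - w * arrival i x powr (-\<alpha>))"
          by (simp add: exp_sum)
        finally show ?thesis by (simp add: sum_distrib_left)
      qed
      have l: "(\<lambda>n. exp (- w * (\<Sum>i<n. arrival i x powr (-\<alpha>)))) \<longlonglongrightarrow> laplace_kernel \<alpha> w x"
        unfolding laplace_kernel_eq[OF w] inv_power_sum_def by (rule exp_partial_sums_tendsto) (auto simp: w)
      show ?case unfolding Pe by (rule l)
    qed
    show "AE x in M. norm (P n x) \<le> 1" for n
    proof (intro AE_I2)
      fix x
      have "0 \<le> P n x" "P n x \<le> 1" unfolding P_def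
        using w laplace_g_le_one laplace_g_nonneg by (auto intro: prod_nonneg prod_le_1)
      then show "norm (P n x) \<le> 1" by simp
    qed
  qed (auto intro: Pm)
  from LIMSEQ_unique[OF lim2 lim1] show ?thesis by (simp add: g(2))
qed

lemma AE_summable_inv_powers:
  assumes a: "1 < \<alpha>"
  shows "AE x in M. summable (\<lambda>i. arrival i x powr (-\<alpha>))"
proof -
  define A where "A = {x \<in> space M. 0 < laplace_kernel \<alpha> 1 x}"
  have Am: "A \<in> sets M" unfolding A_def by measurable
  have A_iff: "x \<in> A \<longleftrightarrow> x \<in> space M \<and> summable (\<lambda>i. arrival i x powr (-\<alpha>))" for x
    unfolding A_def by (simp add: laplace_kernel_eq)
  define \<Gamma> where "\<Gamma> = Gamma (1 - 1/\<alpha>)"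
  have \<Gamma>: "0 < \<Gamma>" unfolding \<Gamma>_def using a by (intro Gamma_real_pos) (simp add: field_simps)
  have bound: "exp (- e) \<le> prob A" if e: "0 < e" for e
  proof -
    define w where "w = (e / \<Gamma>) powr \<alpha>"
    have w: "0 < w" unfolding w_def using e \<Gamma> by simp
    have ww: "w powr (1/\<alpha>) = e / \<Gamma>" unfolding w_def using e \<Gamma> a by (simp add: powr_powr)
    have "exp (- e) = (\<integral>x. laplace_kernel \<alpha> w x \<partial>M)"
      using integral_laplace_kernel[OF w a] ww \<Gamma> by (simp add: \<Gamma>_def)
    also have "\<dots> \<le> (\<integral>x. indicator A x \<partial>M)"
    proof (rule integral_mono)
      show "integrable M (laplace_kernel \<alpha> w)"
        by (rule integrable_const_bound[where B=1]) (use laplace_kernel_bounds[OF w] in auto)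
      show "integrable M (\<lambda>x. indicator A x :: real)"
        using Am by (intro integrable_real_indicator) (auto simp: less_top[symmetric])
      fix x assume "x \<in> space M"
      then show "laplace_kernel \<alpha> w x \<le> indicator A x"
        using inv_power_sum_nonneg[of x \<alpha>] w by (auto simp: indicator_def A_iff laplace_kernel_eq[OF w])
    qed
    also have "\<dots> = prob A" using Am by simp
    finally show ?thesis .
  qed
  have "1 \<le> prob A"
  proof (rule tendsto_le[OF _ tendsto_const])
    show "((\<lambda>e. exp (- e)) \<longlongrightarrow> 1) (at_right (0::real))"
      by (rule tendsto_eq_intros refl | simp)+
    show "\<forall>\<^sub>F e in at_right 0. exp (- e) \<le> prob A"
      using eventually_at_right_less[of "0::real"] by eventually_elim (rule bound)
  qed simp
  then have "prob A = 1" using prob_le_1[of A] by simp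
  then have "AE x in M. x \<in> A" using Am by (simp add: prob_eq_1)
  then show ?thesis by (auto simp: A_iff)
qed

end

section \<open>Concentration\<close>

lemma nn_integral_powr_tail:
  fixes u e :: real
  assumes "0 < u" "e < -1"
  shows "(\<integral>\<^sup>+t. ennreal (t powr e) * indicator {u..} t \<partial>lborel) = ennreal (- (u powr (e+1)) / (e+1))"
  by (rule nn_integral_has_integral_lebesgue'[OF _ has_integral_powr_to_inf[OF assms(2,1)]]) simp

lemma nn_integral_split_at:
  fixes f :: "real \<Rightarrow> real" and u :: real
  assumes "0 < u" and [measurable]: "f \<in> borel_measurable borel" and nn: "\<And>t. 0 \<le> f t"
  shows "(\<integral>\<^sup>+t. ennreal (f t) * indicator {0<..} t \<partial>lborel)
       = (\<integral>\<^sup>+t. ennreal (f t) * indicator {0<..<u} t \<partial>lborel) + (\<integral>\<^sup>+t. ennreal (f t) * indicator {u..} t \<partial>lborel)"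
proof -
  have "(\<integral>\<^sup>+t. ennreal (f t) * indicator {0<..} t \<partial>lborel)
      = (\<integral>\<^sup>+t. ennreal (f t) * indicator {0<..<u} t + ennreal (f t) * indicator {u..} t \<partial>lborel)"
    using assms(1) by (intro nn_integral_cong) (auto simp: indicator_def)
  also have "\<dots> = (\<integral>\<^sup>+t. ennreal (f t) * indicator {0<..<u} t \<partial>lborel) + (\<integral>\<^sup>+t. ennreal (f t) * indicator {u..} t \<partial>lborel)"
    by (rule nn_integral_add) auto
  finally show ?thesis .
qed

definition truncated_power :: "real \<Rightarrow> real \<Rightarrow> real \<Rightarrow> real" where
  "truncated_power u \<alpha> t = u powr \<alpha> * max t u powr (-\<alpha>)"

lemma truncated_power_measurable[measurable]: "truncated_power u \<alpha> \<in> borel_measurable borel"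
  unfolding truncated_power_def[abs_def] by measurable

lemma truncated_power_nonneg: "0 \<le> truncated_power u \<alpha> t"
  by (simp add: truncated_power_def)

lemma truncated_power_below: "0 < u \<Longrightarrow> t \<le> u \<Longrightarrow> truncated_power u \<alpha> t = 1"
  by (simp add: truncated_power_def max_def powr_minus)

lemma truncated_power_above: "u \<le> t \<Longrightarrow> truncated_power u \<alpha> t = u powr \<alpha> * t powr (-\<alpha>)"
  by (simp add: truncated_power_def)

lemma truncated_power_le_one:
  assumes "0 < u" "0 \<le> \<alpha>"
  shows "truncated_power u \<alpha> t \<le> 1"
proof -
  have "max t u powr (-\<alpha>) \<le> u powr (-\<alpha>)"
    using assms by (intro powr_mono2') auto
  then have "truncated_power u \<alpha> t \<le> u powr \<alpha> * u powr (-\<alpha>)"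
    unfolding truncated_power_def by (intro mult_left_mono) auto
  also have "\<dots> = 1"
    using assms by (simp add: powr_minus)
  finally show ?thesis .
qed

lemma truncated_power_square: "0 < u \<Longrightarrow> (truncated_power u \<alpha> t)\<^sup>2 = truncated_power u (2 * \<alpha>) t"
  by (simp add: truncated_power_def power_mult_distrib powr_power)

lemma nn_integral_truncated_power:
  assumes u: "0 < u" and a: "1 < \<alpha>"
  shows "(\<integral>\<^sup>+t. ennreal (truncated_power u \<alpha> t) * indicator {0<..} t \<partial>lborel) = ennreal (u + u / (\<alpha> - 1))"
proof -
  have "(\<integral>\<^sup>+t. ennreal (truncated_power u \<alpha> t) * indicator {0<..<u} t \<partial>lborel)
      = (\<integral>\<^sup>+t. ennreal 1 * indicator {0<..<u} t \<partial>lborel)"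
    using u by (intro nn_integral_cong) (auto simp: indicator_def truncated_power_below)
  also have "\<dots> = ennreal u"
    using u by simp
  finally have below: "(\<integral>\<^sup>+t. ennreal (truncated_power u \<alpha> t) * indicator {0<..<u} t \<partial>lborel) = ennreal u" .
  have "(\<integral>\<^sup>+t. ennreal (truncated_power u \<alpha> t) * indicator {u..} t \<partial>lborel)
      = (\<integral>\<^sup>+t. ennreal (u powr \<alpha>) * (ennreal (t powr (-\<alpha>)) * indicator {u..} t) \<partial>lborel)"
    using u by (intro nn_integral_cong) (auto simp: indicator_def truncated_power_above ennreal_mult')
  also have "\<dots> = ennreal (u powr \<alpha>) * ennreal (- (u powr (-\<alpha>+1)) / (-\<alpha>+1))"
    using u a by (subst nn_integral_cmult) (auto simp: nn_integral_powr_tail)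
  also have "\<dots> = ennreal (u / (\<alpha> - 1))"
    using u a by (simp add: ennreal_mult'[symmetric] powr_add[symmetric] field_simps)
  finally have above: "(\<integral>\<^sup>+t. ennreal (truncated_power u \<alpha> t) * indicator {u..} t \<partial>lborel) = ennreal (u / (\<alpha> - 1))" .
  show ?thesis
    using u a by (simp add: nn_integral_split_at[OF u] truncated_power_nonneg below above ennreal_plus)
qed

lemma nn_integral_truncated_power_square_le:
  assumes u: "0 < u" and a: "1 < \<alpha>"
  shows "(\<integral>\<^sup>+t. ennreal ((truncated_power u \<alpha> t)\<^sup>2) * indicator {0<..} t \<partial>lborel) \<le> ennreal (2 * u)"
proof -
  have "(\<integral>\<^sup>+t. ennreal ((truncated_power u \<alpha> t)\<^sup>2) * indicator {0<..} t \<partial>lborel) = ennreal (u + u / (2 * \<alpha> - 1))"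
    using u a by (simp add: truncated_power_square nn_integral_truncated_power)
  also have "\<dots> \<le> ennreal (2 * u)"
    using u a by (intro ennreal_leI) (simp add: field_simps)
  finally show ?thesis .
qed

definition upper_g :: "real \<Rightarrow> real \<Rightarrow> real \<Rightarrow> real" where
  "upper_g u \<alpha> t = (if t \<le> 0 then 0 else exp (truncated_power u \<alpha> t) - 1)"

lemma upper_g_measurable[measurable]: "upper_g u \<alpha> \<in> borel_measurable borel"
  unfolding upper_g_def[abs_def] by measurable

lemma upper_g_nonneg: "0 \<le> upper_g u \<alpha> t"
  by (simp add: upper_g_def truncated_power_nonneg)

lemma upper_g_le: "0 < u \<Longrightarrow> 0 \<le> \<alpha> \<Longrightarrow> upper_g u \<alpha> t \<le> exp 1 - 1"
  by (simp add: upper_g_def truncated_power_le_one)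

lemma one_plus_upper_g: "0 < u \<Longrightarrow> u \<le> t \<Longrightarrow> 1 + upper_g u \<alpha> t = exp (u powr \<alpha> * t powr (-\<alpha>))"
  by (simp add: upper_g_def truncated_power_above)

lemma isCont_upper_g:
  assumes "0 < u" "0 < t"
  shows "isCont (upper_g u \<alpha>) t"
proof -
  have "eventually (\<lambda>x. upper_g u \<alpha> x = exp (u powr \<alpha> * max x u powr (-\<alpha>)) - 1) (nhds t)"
    using eventually_nhds_in_open[of "{0<..}" t] assms
    by (auto elim!: eventually_mono simp: upper_g_def truncated_power_def)
  moreover have "isCont (\<lambda>x. exp (u powr \<alpha> * max x u powr (-\<alpha>)) - 1) t"
    using assms by (intro continuous_intros) (auto simp: max_def)
  ultimately show ?thesis
    by (simp add: isCont_cong)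
qed

lemma nn_integral_upper_g_le:
  assumes u: "0 < u" and a: "1 < \<alpha>"
  shows "(\<integral>\<^sup>+t. ennreal (upper_g u \<alpha> t) \<partial>lborel) \<le> ennreal (u * (3 + 1 / (\<alpha> - 1)))"
proof -
  let ?y = "truncated_power u \<alpha>"
  have "(\<integral>\<^sup>+t. ennreal (upper_g u \<alpha> t) \<partial>lborel)
      \<le> (\<integral>\<^sup>+t. ennreal (?y t) * indicator {0<..} t + ennreal ((?y t)\<^sup>2) * indicator {0<..} t \<partial>lborel)"
  proof (rule nn_integral_mono)
    fix t
    have "upper_g u \<alpha> t \<le> (?y t + (?y t)\<^sup>2) * indicator {0<..} t"
      using exp_bound[OF truncated_power_nonneg truncated_power_le_one[OF u, of \<alpha> t]] a
      by (auto simp: upper_g_def indicator_def)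
    then have "ennreal (upper_g u \<alpha> t) \<le> ennreal ((?y t + (?y t)\<^sup>2) * indicator {0<..} t)"
      by (rule ennreal_leI)
    also have "\<dots> = ennreal (?y t) * indicator {0<..} t + ennreal ((?y t)\<^sup>2) * indicator {0<..} t"
      by (cases "0 < t") (simp_all add: truncated_power_nonneg ennreal_plus)
    finally show "ennreal (upper_g u \<alpha> t) \<le> ennreal (?y t) * indicator {0<..} t + ennreal ((?y t)\<^sup>2) * indicator {0<..} t" .
  qed
  also have "\<dots> = (\<integral>\<^sup>+t. ennreal (?y t) * indicator {0<..} t \<partial>lborel) + (\<integral>\<^sup>+t. ennreal ((?y t)\<^sup>2) * indicator {0<..} t \<partial>lborel)"
    by (rule nn_integral_add) auto
  also have "\<dots> \<le> ennreal (u + u / (\<alpha> - 1)) + ennreal (2 * u)"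
    using nn_integral_truncated_power[OF u a] nn_integral_truncated_power_square_le[OF u a] by (intro add_mono) auto
  also have "\<dots> = ennreal (u * (3 + 1 / (\<alpha> - 1)))"
    using u a by (simp add: ennreal_plus[symmetric] field_simps)
  finally show ?thesis .
qed

lemma tail_integrable_upper_g:
  assumes u: "0 < u" and a: "1 < \<alpha>"
  shows "tail_integrable (upper_g u \<alpha>) (exp 1 - 1)"
    and "tail_integrable.tail_mass (upper_g u \<alpha>) 0 \<le> u * (3 + 1 / (\<alpha> - 1))"
proof -
  define V where "V = enn2real (\<integral>\<^sup>+t. ennreal (upper_g u \<alpha> t) \<partial>lborel)"
  have "(\<integral>\<^sup>+t. ennreal (upper_g u \<alpha> t) \<partial>lborel) < \<infinity>"
    by (rule le_less_trans[OF nn_integral_upper_g_le[OF u a]]) simp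
  then have V: "(\<integral>\<^sup>+t. ennreal (upper_g u \<alpha> t) \<partial>lborel) = ennreal V"
    unfolding V_def by (intro ennreal_enn2real[symmetric]) simp
  have V_le: "V \<le> u * (3 + 1 / (\<alpha> - 1))"
    using nn_integral_upper_g_le[OF u a] u a unfolding V by (simp add: ennreal_le_iff)
  note tf = tail_integrable_of_nn_integral[OF upper_g_nonneg upper_g_le[OF u] _ upper_g_measurable
      isCont_upper_g[OF u] V]
  show "tail_integrable (upper_g u \<alpha>) (exp 1 - 1)"
    using a by (intro tf(1)) (auto simp: upper_g_def V_def)
  have "tail_integrable.tail_mass (upper_g u \<alpha>) 0 = V"
    using a by (intro tf(2)) (auto simp: upper_g_def V_def)
  with V_le show "tail_integrable.tail_mass (upper_g u \<alpha>) 0 \<le> u * (3 + 1 / (\<alpha> - 1))"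
    by simp
qed

lemma ln_pi_le_2: "ln pi \<le> 2"
proof -
  have "exp (1::real) \<ge> 2" using exp_ge_add_one_self[of 1] by simp
  then have "exp (2::real) \<ge> 4"
    using mult_mono[OF \<open>exp 1 \<ge> 2\<close> \<open>exp 1 \<ge> 2\<close>] by (simp add: exp_add[symmetric])
  then have "pi \<le> exp 2" using pi_less_4 by simp
  then show ?thesis using ln_le_cancel_iff[of pi "exp 2"] by simp
qed

lemma Gamma_one_plus_ge:
  fixes x :: real
  assumes x: "0 < x" "x < 1"
  shows "1 - 2 * x \<le> Gamma (1 + x)"
proof -
  \<comment> \<open>\<open>1\<close> is a convex combination of \<open>1 + x\<close> and \<open>1/2\<close>; use log-convexity of \<open>Gamma\<close> and \<open>Gamma (1/2) = sqrt pi\<close>.\<close>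
  define t where "t = 2 * x / (1 + 2 * x)"
  have t: "0 \<le> t" "t \<le> 1" using x by (auto simp: t_def)
  have comb: "(1 - t) *\<^sub>R (1 + x) + t *\<^sub>R (1/2) = (1::real)"
  proof -
    have d: "1 + 2 * x \<noteq> 0" using x by simp
    show ?thesis unfolding t_def using d by (simp add: divide_simps) (simp add: algebra_simps)
  qed
  have "(ln \<circ> Gamma) ((1 - t) *\<^sub>R (1 + x) + t *\<^sub>R (1/2::real)) \<le> (1 - t) * (ln \<circ> Gamma) (1 + x) + t * (ln \<circ> Gamma) (1/2)"
    by (rule convex_onD[OF log_convex_Gamma_real t]) (use x in auto)
  then have "0 \<le> (1 - t) * ln (Gamma (1 + x)) + t * ln (sqrt pi)"
    unfolding comb by (simp add: Gamma_one_half_real)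
  moreover have "ln (sqrt pi) = ln pi / 2" by (simp add: ln_sqrt)
  ultimately have "0 \<le> (1 - t) * ln (Gamma (1 + x)) + t * (ln pi / 2)" by simp
  moreover have "(1 - t) * ln (Gamma (1 + x)) + t * (ln pi / 2) = (ln (Gamma (1 + x)) + x * ln pi) / (1 + 2 * x)"
  proof -
    have d: "1 + 2 * x \<noteq> 0" using x by simp
    show ?thesis unfolding t_def using d by (simp add: divide_simps) (simp add: algebra_simps)
  qed
  ultimately have "0 \<le> (ln (Gamma (1 + x)) + x * ln pi) / (1 + 2 * x)" by simp
  then have "0 \<le> ln (Gamma (1 + x)) + x * ln pi"
    using x by (simp add: zero_le_divide_iff)
  then have h: "- (x * ln pi) \<le> ln (Gamma (1 + x))" by simp
  have "1 - 2 * x \<le> 1 + (- (x * ln pi))"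
    using ln_pi_le_2 x by (simp add: mult_left_mono)
  also have "\<dots> \<le> exp (- (x * ln pi))" by (rule exp_ge_add_one_self)
  also have "\<dots> \<le> exp (ln (Gamma (1 + x)))" using h by simp
  also have "\<dots> = Gamma (1 + x)" using x by simp
  finally show ?thesis .
qed

context exp_arrivals
begin

lemma prob_laplace_kernel_gt:
  assumes a: "1 < \<alpha>"
  shows "prob {x\<in>space M. exp (- \<beta>) < laplace_kernel \<alpha> 1 x} \<le> exp \<beta> * exp (- Gamma (1 - 1/\<alpha>))"
proof -
  let ?L = "{x\<in>space M. exp (- \<beta>) < laplace_kernel \<alpha> 1 x}"
  have Lm: "?L \<in> sets M" by measurable
  have "exp (- \<beta>) * prob ?L = (\<integral>x. exp (- \<beta>) * indicator ?L x \<partial>M)"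
    using Lm by simp
  also have "\<dots> \<le> (\<integral>x. laplace_kernel \<alpha> 1 x \<partial>M)"
  proof (rule integral_mono)
    show "integrable M (\<lambda>x. exp (- \<beta>) * indicator ?L x)"
      using Lm by (intro integrable_mult_right integrable_real_indicator) (auto simp: less_top[symmetric])
    show "integrable M (laplace_kernel \<alpha> 1)"
      by (rule integrable_const_bound[where B=1]) (use laplace_kernel_bounds[of 1 \<alpha>] in auto)
    fix x assume "x \<in> space M"
    then show "exp (- \<beta>) * indicator ?L x \<le> laplace_kernel \<alpha> 1 x"
      using laplace_kernel_bounds[of 1 \<alpha> x] by (auto simp: indicator_def)
  qed
  also have "\<dots> = exp (- Gamma (1 - 1/\<alpha>))"
    using integral_laplace_kernel[of 1 \<alpha>] a by simp
  finally have "exp (- \<beta>) * prob ?L \<le> exp (- Gamma (1 - 1/\<alpha>))" .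
  then show ?thesis
    by (simp add: exp_minus field_simps)
qed

lemma prob_first_gap_less:
  assumes u: "0 \<le> u"
  shows "prob {x\<in>space M. E 0 x < u} \<le> u"
proof -
  have "prob {x\<in>space M. E 0 x < u} \<le> prob {x\<in>space M. E 0 x \<le> u}"
    by (intro finite_measure_mono) auto
  also have "\<dots> = 1 - exp (- u * 1)"
    by (rule exponential_distributedD_le[OF dist u]) simp
  also have "\<dots> \<le> u" using exp_ge_add_one_self[of "-u"] by simp
  finally show ?thesis .
qed

lemma nn_integral_prod_one_plus_le:
  assumes tf: "tail_integrable g C"
  shows "(\<integral>\<^sup>+x. ennreal (\<Prod>i<n. 1 + g (arrival i x)) \<partial>M) \<le> ennreal (exp (tail_integrable.tail_mass g 0))"
proof -
  interpret tail_integrable g C by (rule tf)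
  have "(\<integral>\<^sup>+x. ennreal (\<Prod>i<n. 1 + g (arrival i x)) \<partial>M)
      \<le> (\<integral>\<^sup>+x. ennreal ((\<Prod>i<n. 1 + g (arrival i x)) * exp (tail_mass (gap_sum n x))) \<partial>M)"
  proof (intro nn_integral_mono ennreal_leI)
    fix x
    have "1 \<le> (\<Prod>i<n. 1 + g (arrival i x))"
      using g_nn by (intro prod_ge_1) auto
    moreover have "1 \<le> exp (tail_mass (gap_sum n x))"
      using tail_mass_nonneg by simp
    ultimately show "(\<Prod>i<n. 1 + g (arrival i x)) \<le> (\<Prod>i<n. 1 + g (arrival i x)) * exp (tail_mass (gap_sum n x))"
      by (simp add: mult_le_cancel_left1)
  qed
  also have "\<dots> = ennreal (exp (tail_mass 0))"
    by (rule nn_integral_prod_one_plus[OF tf])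
  finally show ?thesis .
qed

lemma prob_partial_sums_exceed:
  assumes u: "0 < u" and a: "1 < \<alpha>"
  shows "prob {x\<in>space M. u \<le> E 0 x \<and> (\<exists>n. \<beta> < (\<Sum>i<n. arrival i x powr (-\<alpha>)))}
         \<le> exp (tail_integrable.tail_mass (upper_g u \<alpha>) 0 - u powr \<alpha> * \<beta>)"
proof -
  define \<theta> where "\<theta> = u powr \<alpha>"
  define G where "G = tail_integrable.tail_mass (upper_g u \<alpha>) 0"
  define B where "B = {x\<in>space M. u \<le> E 0 x \<and> (\<exists>n. \<beta> < (\<Sum>i<n. arrival i x powr (-\<alpha>)))}"
  define Y where "Y n x = (\<Prod>i<n. 1 + upper_g u \<alpha> (arrival i x))" for n x
  have Bm: "B \<in> sets M" unfolding B_def by measurable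
  have Ym[measurable]: "Y n \<in> borel_measurable M" for n unfolding Y_def by measurable
  have Y1: "1 \<le> Y n x" for n x unfolding Y_def using upper_g_nonneg by (intro prod_ge_1) auto
  have Yinc: "incseq (\<lambda>n x. ennreal (Y n x))"
  proof (rule incseq_SucI, rule le_funI)
    fix n x
    have "Y n x \<le> Y n x * (1 + upper_g u \<alpha> (arrival n x))"
      using Y1[of n x] upper_g_nonneg by (intro mult_le_cancel_left1[THEN iffD2]) auto
    then show "ennreal (Y n x) \<le> ennreal (Y (Suc n) x)"
      unfolding Y_def by (intro ennreal_leI) (simp add: mult.commute)
  qed
  \<comment> \<open>On \<open>B\<close> all arrivals are beyond \<open>u\<close>, where \<open>1 + upper_g\<close> is exactly \<open>exp (\<theta> t powr (-\<alpha>))\<close>.\<close>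
  have "exp (\<theta> * \<beta>) \<le> (SUP n. ennreal (Y n x))" if "x \<in> B" and "\<forall>i. 0 \<le> E i x" for x
  proof -
    obtain n where n: "\<beta> < (\<Sum>i<n. arrival i x powr (-\<alpha>))" and u0: "u \<le> E 0 x"
      using \<open>x \<in> B\<close> by (auto simp: B_def)
    have "u \<le> arrival i x" for i
      using u0 member_le_sum[of 0 "{..<Suc i}" "\<lambda>j. E j x"] that(2) by auto
    then have "Y n x = (\<Prod>i<n. exp (\<theta> * arrival i x powr (-\<alpha>)))"
      unfolding Y_def \<theta>_def by (intro prod.cong refl one_plus_upper_g u)
    also have "\<dots> = exp (\<theta> * (\<Sum>i<n. arrival i x powr (-\<alpha>)))"
      by (simp add: exp_sum sum_distrib_left)
    finally have "exp (\<theta> * \<beta>) \<le> Y n x"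
      using n u by (simp add: \<theta>_def)
    then have "ennreal (exp (\<theta> * \<beta>)) \<le> ennreal (Y n x)" by (rule ennreal_leI)
    also have "\<dots> \<le> (SUP n. ennreal (Y n x))" by (rule SUP_upper) simp
    finally show ?thesis .
  qed
  then have "(\<integral>\<^sup>+x. ennreal (exp (\<theta> * \<beta>)) * indicator B x \<partial>M) \<le> (\<integral>\<^sup>+x. (SUP n. ennreal (Y n x)) \<partial>M)"
    using AE_E_nonneg by (intro nn_integral_mono_AE) (auto elim!: eventually_mono split: split_indicator)
  also have "\<dots> = (SUP n. (\<integral>\<^sup>+x. ennreal (Y n x) \<partial>M))"
    by (rule nn_integral_monotone_convergence_SUP[OF Yinc]) simp
  also have "\<dots> \<le> ennreal (exp G)"
    unfolding Y_def G_def
    by (intro SUP_least nn_integral_prod_one_plus_le[OF tail_integrable_upper_g(1)[OF u a]])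
  finally have "ennreal (exp (\<theta> * \<beta>) * prob B) \<le> ennreal (exp G)"
    using Bm by (simp add: nn_integral_cmult_indicator emeasure_eq_measure ennreal_mult')
  then have "prob B \<le> exp G / exp (\<theta> * \<beta>)"
    by (simp add: ennreal_le_iff field_simps)
  then show ?thesis
    by (simp add: B_def G_def \<theta>_def exp_diff)
qed

end

lemma exp_neg_4_2_le: "exp (- 4.2 :: real) \<le> 1 / 24"
proof -
  have "(1.7::real) \<le> exp 0.7" using exp_ge_add_one_self[of "0.7::real"] by simp
  then have "(1.7::real) ^ 6 \<le> exp 0.7 ^ 6" by (intro power_mono) auto
  also have "exp (0.7::real) ^ 6 = exp 4.2" by (simp add: exp_of_nat_mult[symmetric])
  finally have h: "(1.7::real) ^ 6 \<le> exp 4.2" .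
  have "(24::real) \<le> 1.7 ^ 6" by (simp add: power_divide eval_nat_numeral)
  with h have "24 \<le> exp (4.2::real)" by linarith
  then show ?thesis by (simp add: exp_minus field_simps)
qed

lemma one_le_ln_3: "1 \<le> ln (3::real)"
proof -
  have "exp (1::real) \<le> 1 + 1 + 1\<^sup>2" by (rule exp_bound) auto
  then have "exp 1 \<le> (3::real)" by simp
  then show ?thesis by (subst ln_ge_iff) auto
qed

lemma rate_bound_facts:
  fixes \<epsilon> \<delta> c :: real
  assumes d: "0 < \<delta>" "\<delta> \<le> 1/3" and c: "0 < c"
    and cb: "c \<le> exp (- 4.2) * \<delta> * \<epsilon>\<^sup>2 / (- ln \<delta>)"
  shows "c * (- ln \<delta>) \<le> \<delta> * \<epsilon>\<^sup>2 / 24" "ln 3 \<le> - ln \<delta>" "c \<le> c * (- ln \<delta>)"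
proof -
  have "ln \<delta> \<le> ln (1/3)" using d by simp
  then show L3: "ln 3 \<le> - ln \<delta>" by (simp add: ln_div)
  then have L1: "1 \<le> - ln \<delta>" using one_le_ln_3 by linarith
  have "c * (- ln \<delta>) \<le> exp (- 4.2) * \<delta> * \<epsilon>\<^sup>2"
    using cb L1 by (simp add: field_simps)
  also have "\<dots> \<le> (1/24) * (\<delta> * \<epsilon>\<^sup>2)"
    using exp_neg_4_2_le d by (simp only: mult.assoc) (intro mult_right_mono, auto)
  finally show "c * (- ln \<delta>) \<le> \<delta> * \<epsilon>\<^sup>2 / 24" by simp
  show "c \<le> c * (- ln \<delta>)" using mult_left_mono[OF L1, of c] c by simp
qed

lemma Gamma_one_minus_inverse_ge:
  fixes c :: real
  assumes c: "0 < c"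
  shows "(1 - c) / c \<le> Gamma (1 - 1 / (1 + c))"
proof -
  define x where "x = c / (1 + c)"
  have x: "0 < x" "x < 1" using c by (auto simp: x_def)
  have "x \<notin> \<int>\<^sub>\<le>\<^sub>0" using x by (auto elim!: nonpos_Ints_cases)
  then have "Gamma x = Gamma (1 + x) / x"
    using Gamma_plus1[of x] x by (simp add: add.commute)
  then have "(1 - 2 * x) / x \<le> Gamma x"
    using Gamma_one_plus_ge[OF x] x by (simp add: divide_right_mono)
  moreover have "(1 - 2 * x) / x = (1 - c) / c" "1 - 1 / (1 + c) = x"
    using c by (simp_all add: x_def divide_simps)
  ultimately show ?thesis by simp
qed

lemma lower_tail_estimate:
  fixes \<epsilon> \<delta> c :: real
  assumes e: "0 < \<epsilon>" "\<epsilon> \<le> 1" and d: "0 < \<delta>" "\<delta> \<le> 1/3" and c: "0 < c"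
    and cb: "c \<le> exp (- 4.2) * \<delta> * \<epsilon>\<^sup>2 / (- ln \<delta>)"
  shows "exp (exp (- \<epsilon> / 2) / c) * exp (- Gamma (1 - 1 / (1 + c))) \<le> \<delta> / 3"
proof -
  note s = rate_bound_facts[OF d c cb]
  define L where "L = - ln \<delta>"
  have Gamma_ge: "(1 - c) / c \<le> Gamma (1 - 1 / (1 + c))"
    using c by (rule Gamma_one_minus_inverse_ge)
  have e1: "\<epsilon> / 3 \<le> 1 - exp (- \<epsilon> / 2)"
  proof -
    have "1 + \<epsilon> / 2 \<le> exp (\<epsilon> / 2)" by (rule exp_ge_add_one_self)
    then have "exp (- \<epsilon> / 2) \<le> 1 / (1 + \<epsilon> / 2)"
      using e by (simp add: exp_minus field_simps)
    also have "\<dots> \<le> 1 - \<epsilon> / 3" using e by (simp add: field_simps)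
    finally show ?thesis by simp
  qed
  have key: "c + c * (L + ln 3) \<le> 1 - exp (- \<epsilon> / 2)"
  proof -
    have "c * ln 3 \<le> c * L" using mult_left_mono[OF s(2), of c] c unfolding L_def by simp
    then have "c + c * (L + ln 3) \<le> 3 * (c * L)" using s(3) unfolding L_def by (simp add: algebra_simps)
    also have "\<dots> \<le> 3 * (\<delta> * \<epsilon>\<^sup>2 / 24)" using s(1) unfolding L_def by simp
    also have "\<dots> \<le> \<epsilon> / 3"
    proof -
      have "\<epsilon>\<^sup>2 \<le> \<epsilon>" using e by (simp add: power2_eq_square mult_le_cancel_left1)
      then have "\<delta> * \<epsilon>\<^sup>2 \<le> 1 * \<epsilon>" using d e by (intro mult_mono) auto
      then show ?thesis using e by linarith
    qed
    finally show ?thesis using e1 by simp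
  qed
  have "exp (- \<epsilon> / 2) / c - Gamma (1 - 1 / (1 + c)) \<le> exp (- \<epsilon> / 2) / c - (1 - c) / c"
    using Gamma_ge by simp
  also have "\<dots> = - ((1 - exp (- \<epsilon> / 2)) - c) / c" using c by (simp add: field_simps)
  also have "\<dots> \<le> - (c * (L + ln 3)) / c"
    using key c by (intro divide_right_mono) auto
  also have "\<dots> = ln (\<delta> / 3)" using c d by (simp add: L_def ln_div)
  finally have "exp (exp (- \<epsilon> / 2) / c - Gamma (1 - 1 / (1 + c))) \<le> exp (ln (\<delta> / 3))" by simp
  then show ?thesis using d by (simp add: exp_diff exp_minus field_simps)
qed

lemma upper_tail_estimate:
  fixes \<epsilon> \<delta> c :: real
  assumes e: "0 < \<epsilon>" "\<epsilon> \<le> 1" and d: "0 < \<delta>" "\<delta> \<le> 1/3" and c: "0 < c"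
    and cb: "c \<le> exp (- 4.2) * \<delta> * \<epsilon>\<^sup>2 / (- ln \<delta>)"
  shows "exp ((\<delta>/3) * (3 + 1 / c) - (\<delta>/3) powr (1 + c) * (exp (\<epsilon> / 2) / c)) \<le> \<delta> / 3"
proof -
  note s = rate_bound_facts[OF d c cb]
  define L where "L = - ln \<delta>"
  define u where "u = \<delta> / 3"
  have u: "0 < u" using d by (simp add: u_def)
  have lnu: "ln u = - (L + ln 3)" using d by (simp add: u_def L_def ln_div)
  have up: "u powr (1 + c) = u * exp (- c * (L + ln 3))"
  proof -
    have "u powr (1 + c) = u powr 1 * u powr c" by (rule powr_add)
    also have "u powr c = exp (c * ln u)" using u by (simp add: powr_def mult.commute)
    finally show ?thesis using u by (simp add: lnu algebra_simps)
  qed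
  have E: "u * (3 + 1 / c) - u powr (1 + c) * (exp (\<epsilon> / 2) / c)
      = (u / c) * (3 * c + 1 - exp (\<epsilon> / 2 - c * (L + ln 3)))"
  proof -
    have "exp (\<epsilon> / 2 - c * (L + ln 3)) = exp (\<epsilon> / 2) * exp (- c * (L + ln 3))"
      by (metis exp_add diff_conv_add_uminus mult_minus_left)
    then show ?thesis using c unfolding up by (simp add: field_simps)
  qed
  have br: "3 * c + 1 - exp (\<epsilon> / 2 - c * (L + ln 3)) \<le> - (\<epsilon> / 4)"
  proof -
    have "1 + (\<epsilon> / 2 - c * (L + ln 3)) \<le> exp (\<epsilon> / 2 - c * (L + ln 3))" by (rule exp_ge_add_one_self)
    moreover have "c * ln 3 \<le> c * L" using mult_left_mono[OF s(2), of c] c unfolding L_def by simp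
    moreover have "5 * (c * L) \<le> 5 * (\<delta> * \<epsilon>\<^sup>2 / 24)" using s(1) unfolding L_def by simp
    moreover have "\<delta> * \<epsilon>\<^sup>2 \<le> \<epsilon> / 3"
    proof -
      have "\<epsilon>\<^sup>2 \<le> \<epsilon>" using e by (simp add: power2_eq_square mult_le_cancel_left1)
      then have "\<delta> * \<epsilon>\<^sup>2 \<le> (1/3) * \<epsilon>" using d e by (intro mult_mono) auto
      then show ?thesis by simp
    qed
    ultimately show ?thesis using s(3) e unfolding L_def by (simp add: algebra_simps)
  qed
  have "u * (3 + 1 / c) - u powr (1 + c) * (exp (\<epsilon> / 2) / c) \<le> (u / c) * (- (\<epsilon> / 4))"
    unfolding E using u c br by (intro mult_left_mono) auto
  also have "\<dots> = - (\<delta> * \<epsilon> / (12 * c))" by (simp add: u_def field_simps)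
  also have "\<dots> \<le> - (2 * L)"
  proof -
    have "24 * (c * L) \<le> \<delta> * \<epsilon>\<^sup>2" using s(1) unfolding L_def by simp
    also have "\<dots> \<le> \<delta> * \<epsilon>"
      using e d by (intro mult_left_mono) (auto simp: power2_eq_square mult_le_cancel_left1)
    finally have "2 * L \<le> \<delta> * \<epsilon> / (12 * c)" using c by (simp add: field_simps)
    then show ?thesis by simp
  qed
  also have "\<dots> \<le> ln (\<delta> / 3)"
    using s(2) d by (simp add: L_def ln_div)
  finally have "exp (u * (3 + 1 / c) - u powr (1 + c) * (exp (\<epsilon> / 2) / c)) \<le> exp (ln (\<delta> / 3))" by simp
  then show ?thesis using d by (simp add: u_def)
qed

context exp_arrivals
begin

lemma integral_exp_neg_inv_power_sum:
  assumes w: "0 < w" and a: "1 < \<alpha>"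
  shows "(\<integral>x. exp (- w * inv_power_sum \<alpha> x) \<partial>M) = exp (- (w powr (1/\<alpha>)) * Gamma (1 - 1/\<alpha>))"
proof -
  have "(\<integral>x. exp (- w * inv_power_sum \<alpha> x) \<partial>M) = (\<integral>x. laplace_kernel \<alpha> w x \<partial>M)"
  proof (rule integral_cong_AE)
    show "AE x in M. exp (- w * inv_power_sum \<alpha> x) = laplace_kernel \<alpha> w x"
      using AE_summable_inv_powers[OF a] by eventually_elim (simp add: laplace_kernel_eq[OF w])
  qed auto
  also have "\<dots> = exp (- (w powr (1/\<alpha>)) * Gamma (1 - 1/\<alpha>))" by (rule integral_laplace_kernel[OF w a])
  finally show ?thesis .
qed

lemma inv_power_sum_outside_subset:
  "{x \<in> space M. inv_power_sum \<alpha> x \<notin> {a .. b}}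
   \<subseteq> {x \<in> space M. \<not> 0 < laplace_kernel \<alpha> 1 x} \<union> {x\<in>space M. exp (- a) < laplace_kernel \<alpha> 1 x}
     \<union> {x\<in>space M. E 0 x < u} \<union> {x\<in>space M. u \<le> E 0 x \<and> (\<exists>n. b < (\<Sum>i<n. arrival i x powr (-\<alpha>)))}"
proof (intro subsetI)
  fix x assume x: "x \<in> {x \<in> space M. inv_power_sum \<alpha> x \<notin> {a .. b}}"
  show "x \<in> {x \<in> space M. \<not> 0 < laplace_kernel \<alpha> 1 x} \<union> {x\<in>space M. exp (- a) < laplace_kernel \<alpha> 1 x}
     \<union> {x\<in>space M. E 0 x < u} \<union> {x\<in>space M. u \<le> E 0 x \<and> (\<exists>n. b < (\<Sum>i<n. arrival i x powr (-\<alpha>)))}"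
  proof (cases "0 < laplace_kernel \<alpha> 1 x")
    case True
    then have sm: "summable (\<lambda>i. arrival i x powr (-\<alpha>))"
      by (simp add: laplace_kernel_eq split: if_splits)
    from x consider "inv_power_sum \<alpha> x < a" | "b < inv_power_sum \<alpha> x" by fastforce
    then show ?thesis
    proof cases
      case 1
      then show ?thesis using x sm by (simp add: laplace_kernel_eq)
    next
      case 2
      have "(\<lambda>n. \<Sum>i<n. arrival i x powr (-\<alpha>)) \<longlonglongrightarrow> inv_power_sum \<alpha> x"
        unfolding inv_power_sum_def by (rule summable_LIMSEQ[OF sm])
      from order_tendstoD(1)[OF this 2] obtain n where "b < (\<Sum>i<n. arrival i x powr (-\<alpha>))"
        by (auto simp: eventually_sequentially)
      then show ?thesis using x by (auto simp: not_less)
    qed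
  qed (use x in simp)
qed

lemma prob_inv_power_sum_outside:
  assumes a: "1 < \<alpha>" and e: "0 < \<epsilon>" "\<epsilon> \<le> 1" and d: "0 < \<delta>" "\<delta> \<le> 1/3"
    and ab: "\<alpha> \<le> exp (- 4.2) * \<delta> * \<epsilon>\<^sup>2 / (- ln \<delta>) + 1"
  shows "measure M {x \<in> space M. inv_power_sum \<alpha> x \<notin> {exp (- \<epsilon> / 2) / (\<alpha> - 1) .. exp (\<epsilon> / 2) / (\<alpha> - 1)}} \<le> \<delta>"
proof -
  define c where "c = \<alpha> - 1"
  have c: "0 < c" "\<alpha> = 1 + c" using a by (simp_all add: c_def)
  have cb: "c \<le> exp (- 4.2) * \<delta> * \<epsilon>\<^sup>2 / (- ln \<delta>)" using ab by (simp add: c_def)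
  define lo where "lo = exp (- \<epsilon> / 2) / c"
  define hi where "hi = exp (\<epsilon> / 2) / c"
  define u where "u = \<delta> / 3"
  have u: "0 < u" using d by (simp add: u_def)
  define N where "N = {x \<in> space M. \<not> 0 < laplace_kernel \<alpha> 1 x}"
  define L where "L = {x\<in>space M. exp (- lo) < laplace_kernel \<alpha> 1 x}"
  define Z where "Z = {x\<in>space M. E 0 x < u}"
  define B where "B = {x\<in>space M. u \<le> E 0 x \<and> (\<exists>n. hi < (\<Sum>i<n. arrival i x powr (-\<alpha>)))}"
  have [measurable]: "N \<in> sets M" "L \<in> sets M" "Z \<in> sets M" "B \<in> sets M"
    unfolding N_def L_def Z_def B_def by measurable
  have "AE x in M. 0 < laplace_kernel \<alpha> 1 x"
    using AE_summable_inv_powers[OF a] by eventually_elim (simp add: laplace_kernel_eq)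
  then have "prob N = 0"
    unfolding N_def by (subst (asm) AE_iff_measurable[OF _ refl]) (auto simp: emeasure_eq_measure)
  moreover have "prob L \<le> \<delta> / 3"
  proof -
    have "prob L \<le> exp lo * exp (- Gamma (1 - 1/\<alpha>))"
      unfolding L_def by (rule prob_laplace_kernel_gt[OF a])
    also have "\<dots> \<le> \<delta> / 3"
      unfolding lo_def c(2) by (rule lower_tail_estimate[OF e d c(1) cb])
    finally show ?thesis .
  qed
  moreover have "prob Z \<le> \<delta> / 3"
    unfolding Z_def using prob_first_gap_less[of u] u by (simp add: u_def)
  moreover have "prob B \<le> \<delta> / 3"
  proof -
    have "prob B \<le> exp (tail_integrable.tail_mass (upper_g u \<alpha>) 0 - u powr \<alpha> * hi)"
      unfolding B_def by (rule prob_partial_sums_exceed[OF u a])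
    also have "\<dots> \<le> exp (u * (3 + 1 / c) - u powr (1 + c) * hi)"
      using tail_integrable_upper_g(2)[OF u a] by (simp add: c_def)
    also have "\<dots> \<le> \<delta> / 3"
      unfolding u_def hi_def by (rule upper_tail_estimate[OF e d c(1) cb])
    finally show ?thesis .
  qed
  moreover have "measure M {x \<in> space M. inv_power_sum \<alpha> x \<notin> {lo .. hi}} \<le> prob N + prob L + prob Z + prob B"
  proof -
    have "measure M {x \<in> space M. inv_power_sum \<alpha> x \<notin> {lo .. hi}} \<le> measure M (N \<union> L \<union> Z \<union> B)"
      unfolding N_def L_def Z_def B_def by (intro finite_measure_mono inv_power_sum_outside_subset) simp
    also have "\<dots> \<le> prob N + prob L + prob Z + prob B"
      by (intro order.trans[OF measure_subadditive] add_mono order_refl) auto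
    finally show ?thesis .
  qed
  ultimately show ?thesis
    unfolding lo_def hi_def c_def by simp
qed

end

theorem mainTheorem12:
  fixes M :: "'a measure" and T :: "nat \<Rightarrow> 'a \<Rightarrow> real" and \<alpha> :: real
  assumes "prob_space M" and "poisson_points M T" and "\<alpha> > 1"
  shows "(\<forall>w::real. w > 0 \<longrightarrow>
            integral\<^sup>L M (\<lambda>x. exp (- w * (\<Sum>i. T i x powr (- \<alpha>))))
              = exp (- (w powr (1 / \<alpha>)) * Gamma (1 - 1 / \<alpha>))) \<and>
         (\<forall>\<epsilon> \<delta> :: real. 0 < \<epsilon> \<longrightarrow> \<epsilon> \<le> 1 \<longrightarrow> 0 < \<delta> \<longrightarrow> \<delta> \<le> 1 / 3 \<longrightarrow>
            \<alpha> \<le> exp (- 4.2) * \<delta> * \<epsilon>\<^sup>2 / (- ln \<delta>) + 1 \<longrightarrow>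
            measure M {x \<in> space M. (\<Sum>i. T i x powr (- \<alpha>)) \<notin>
               {exp (- \<epsilon> / 2) / (\<alpha> - 1) .. exp (\<epsilon> / 2) / (\<alpha> - 1)}} \<le> \<delta>)"
proof -
  from assms(2) obtain E where ind: "prob_space.indep_vars M (\<lambda>_. borel) E UNIV"
    and dist: "\<And>i. distributed M lborel (E i) (exponential_density 1)"
    and TE: "\<And>n x. x \<in> space M \<Longrightarrow> T n x = (\<Sum>i\<le>n. E i x)"
    unfolding poisson_points_def by blast
  interpret exp_arrivals M E
    by (rule exp_arrivals.intro[OF assms(1)], unfold_locales) (use ind dist in auto)
  have ST: "(\<Sum>i. T i x powr (- \<alpha>)) = inv_power_sum \<alpha> x" if "x \<in> space M" for x
    unfolding inv_power_sum_def using TE[OF that] by (simp add: lessThan_Suc_atMost)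
  show ?thesis
  proof (intro conjI allI impI)
    fix w :: real assume w: "0 < w"
    have "integral\<^sup>L M (\<lambda>x. exp (- w * (\<Sum>i. T i x powr (- \<alpha>)))) = (\<integral>x. exp (- w * inv_power_sum \<alpha> x) \<partial>M)"
      by (rule Bochner_Integration.integral_cong) (simp_all add: ST)
    also have "\<dots> = exp (- (w powr (1/\<alpha>)) * Gamma (1 - 1/\<alpha>))" by (rule integral_exp_neg_inv_power_sum[OF w assms(3)])
    finally show "integral\<^sup>L M (\<lambda>x. exp (- w * (\<Sum>i. T i x powr (- \<alpha>)))) = exp (- (w powr (1 / \<alpha>)) * Gamma (1 - 1 / \<alpha>))" .
  next
    fix \<epsilon> \<delta> :: real
    assume h: "0 < \<epsilon>" "\<epsilon> \<le> 1" "0 < \<delta>" "\<delta> \<le> 1 / 3" "\<alpha> \<le> exp (- 4.2) * \<delta> * \<epsilon>\<^sup>2 / (- ln \<delta>) + 1"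
    have "{x \<in> space M. (\<Sum>i. T i x powr (- \<alpha>)) \<notin> {exp (- \<epsilon> / 2) / (\<alpha> - 1) .. exp (\<epsilon> / 2) / (\<alpha> - 1)}}
        = {x \<in> space M. inv_power_sum \<alpha> x \<notin> {exp (- \<epsilon> / 2) / (\<alpha> - 1) .. exp (\<epsilon> / 2) / (\<alpha> - 1)}}"
      using ST by auto
    then show "measure M {x \<in> space M. (\<Sum>i. T i x powr (- \<alpha>)) \<notin>
               {exp (- \<epsilon> / 2) / (\<alpha> - 1) .. exp (\<epsilon> / 2) / (\<alpha> - 1)}} \<le> \<delta>"
      using prob_inv_power_sum_outside[OF assms(3) h] by simp
  qed
qed

end
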